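(* For every $\eta>0$, $$\max_{\rho\in\Delta(\Phi)}\max_{\nu\in\Delta(\Psi)}\min_{p\in\Delta(\Pi)}\mathsf{AIR}^\Phi_{\rho,\eta}(p,\nu)=\mathsf{DEC}^{\mathrm{KL}}_\eta(\mathcal M,\Phi).$$
   Context: Setting: $\mathcal M$ is a finite class of models, $\Pi$ a finite class of policies, $\mathcal O$ a (discrete) observation space. Each model $M$ specifies, for every $\pi\in\Pi$, a distribution $M(\cdot|\pi)\in\Delta(\mathcal O)$, and a value function $V_M:\Pi\to[0,1]$. For $\mu\in\Delta(\mathcal M)$ the mixture model $M^\mu$ is given by $M^\mu(\cdot|\pi)=\mathbb E_{M\sim\mu}[M(\cdot|\pi)]$ with value $V_{M^\mu}(\pi)=\mathbb E_{M\sim\mu}[V_M(\pi)]$; $\mathrm{co}(\mathcal M)$ denotes the set of all such mixtures. For a distribution $\nu$ on $\mathcal M\times\Pi$, $M^\nu$ denotes the mixture with respect to the $\mathcal M$-marginal of $\nu$. $\Phi$ is a collection of pairwise disjoint subsets of $\mathcal M\times\Pi$ and $\Psi=\bigcup_{\phi\in\Phi}\phi$. For $\nu\in\Delta(\Psi)$ write $\nu(\phi)=\sum_{(M,\pi^\star)\in\phi}\nu(M,\pi^\star)$ and define the posterior over $\Phi$ given $(\pi,o)$ by $\nu(\phi|\pi,o)=\frac{\sum_{(M,\pi^\star)\in\phi}\nu(M,\pi^\star)M(o|\pi)}{\sum_{\phi'\in\Phi}\sum_{(M,\pi^\star)\in\phi'}\nu(M,\pi^\star)M(o|\pi)}$,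 written $\nu_\phi(\cdot|\pi,o)\in\Delta(\Phi)$. For $\rho\in\Delta(\Phi)$, $\eta>0$: $\mathsf{AIR}^\Phi_{\rho,\eta}(p,\nu)=\mathbb E_{\pi\sim p}\mathbb E_{(M,\pi^\star)\sim\nu}\mathbb E_{o\sim M(\cdot|\pi)}\big[V_M(\pi^\star)-V_M(\pi)-\tfrac1\eta\mathrm{KL}(\nu_\phi(\cdot|\pi,o),\rho)\big]$. $\Phi$-dependent DEC: $$\mathsf{DEC}^{\mathrm{KL}}_\eta(\mathcal M,\Phi)=\max_{\bar M\in\mathrm{co}(\mathcal M)}\min_{p\in\Delta(\Pi)}\max_{\nu\in\Delta(\Psi)}\mathbb E_{\pi\sim p}\mathbb E_{\phi\sim\nu}\mathbb E_{(M,\pi^\star)\sim\nu(\cdot|\phi)}\Big[V_M(\pi^\star)-V_M(\pi)-\tfrac1\eta\mathrm{KL}\big(M^{\nu(\cdot|\phi)}(\cdot|\pi),\bar M(\cdot|\pi)\big)\Big],$$ where $\nu(\cdot|\phi)$ is $\nu$ conditioned on the cell $\phi$. *)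

theory Defs
  imports "HOL-Probability.Probability"
begin

text \<open>Obs M pi is the observation distribution M(.|pi), a (discrete) pmf;
  V M pi is the value V_M(pi).  Cells of Phi are sets of pairs (M, pi_star).\<close>

text \<open>We use the termwise nonnegative form
  sum_x [ f x ln (f x / g x) + g x - f x ]; for probability distributions this
  equals the usual sum_x f x ln (f x / g x) (the extra terms sum to 1 - 1 = 0),
  with the usual conventions 0 ln(0/q) = 0 and p ln(p/0) = infinity for p > 0.\<close>

definition kl_term :: "real \<Rightarrow> real \<Rightarrow> ennreal" where
  "kl_term a b = (if a = 0 then ennreal b
                  else if b = 0 then \<infinity>
                  else ennreal (a * ln (a / b) + b - a))"

definition KLf :: "('a \<Rightarrow> real) \<Rightarrow> ('a \<Rightarrow> real) \<Rightarrow> ennreal" where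
  "KLf f g = (\<integral>\<^sup>+ x. kl_term (f x) (g x) \<partial>count_space UNIV)"

definition KL :: "'a pmf \<Rightarrow> 'a pmf \<Rightarrow> ennreal" where
  "KL P Q = KLf (pmf P) (pmf Q)"

definition Psi :: "('m \<times> 'p) set set \<Rightarrow> ('m \<times> 'p) set" where
  "Psi Phi = \<Union> Phi"

text \<open>Posterior over Phi given (pi, o): nu_phi(.|pi,o), as a function on cells
  (zero outside Phi).\<close>
definition post ::
  "('m \<Rightarrow> 'p \<Rightarrow> 'o pmf) \<Rightarrow> ('m \<times> 'p) set set \<Rightarrow> ('m \<times> 'p) pmf \<Rightarrow> 'p \<Rightarrow> 'o
     \<Rightarrow> ('m \<times> 'p) set \<Rightarrow> real" where
  "post Obs Phi \<nu> \<pi> ob \<phi> =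
     (if \<phi> \<in> Phi then
        (\<Sum>x\<in>\<phi>. pmf \<nu> x * pmf (Obs (fst x) \<pi>) ob) /
        (\<Sum>\<phi>'\<in>Phi. \<Sum>x\<in>\<phi>'. pmf \<nu> x * pmf (Obs (fst x) \<pi>) ob)
      else 0)"

text \<open>AIR^Phi_{rho,eta}(p, nu) =
  E_{pi~p} E_{(M,pi*)~nu} E_{o~M(.|pi)} [V_M(pi*) - V_M(pi) - KL(nu_phi(.|pi,o), rho)/eta].
  Since the value gap does not depend on o, the innermost expectation is
  V_M(pi*) - V_M(pi) - (1/eta) E_o[KL(...)], where E_o[KL] is a [0,inf] valued
  expectation.\<close>
definition AIR ::
  "('m \<Rightarrow> 'p \<Rightarrow> 'o pmf) \<Rightarrow> ('m \<Rightarrow> 'p \<Rightarrow> real) \<Rightarrow> 'p set \<Rightarrow> ('m \<times> 'p) set set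
     \<Rightarrow> ('m \<times> 'p) set pmf \<Rightarrow> real \<Rightarrow> 'p pmf \<Rightarrow> ('m \<times> 'p) pmf \<Rightarrow> ereal" where
  "AIR Obs V Pis Phi \<rho> \<eta> p \<nu> =
     (\<Sum>\<pi>\<in>Pis. ereal (pmf p \<pi>) *
        (\<Sum>x\<in>Psi Phi. ereal (pmf \<nu> x) *
           (ereal (V (fst x) (snd x) - V (fst x) \<pi>)
            - ereal (1 / \<eta>) * enn2ereal
                (\<integral>\<^sup>+ ob. KLf (post Obs Phi \<nu> \<pi> ob) (pmf \<rho>) \<partial>measure_pmf (Obs (fst x) \<pi>)))))"

definition mix :: "('m \<Rightarrow> 'p \<Rightarrow> 'o pmf) \<Rightarrow> 'm pmf \<Rightarrow> 'p \<Rightarrow> 'o pmf" where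
  "mix Obs \<mu> \<pi> = bind_pmf \<mu> (\<lambda>M. Obs M \<pi>)"

text \<open>Inner objective of the Phi-dependent DEC, for Mbar = M^mu:
  E_{pi~p} E_{phi~nu} E_{(M,pi*)~nu(.|phi)} [V_M(pi*) - V_M(pi)
      - KL(M^{nu(.|phi)}(.|pi), Mbar(.|pi))/eta].
  The M-marginal mixture of nu(.|phi) is mix of (map_pmf fst (cond_pmf nu phi)).
  Terms with nu(phi) = 0 are multiplied by 0.\<close>
definition DEC_obj ::
  "('m \<Rightarrow> 'p \<Rightarrow> 'o pmf) \<Rightarrow> ('m \<Rightarrow> 'p \<Rightarrow> real) \<Rightarrow> 'p set \<Rightarrow> ('m \<times> 'p) set set
     \<Rightarrow> real \<Rightarrow> 'm pmf \<Rightarrow> 'p pmf \<Rightarrow> ('m \<times> 'p) pmf \<Rightarrow> ereal" where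
  "DEC_obj Obs V Pis Phi \<eta> \<mu> p \<nu> =
     (\<Sum>\<pi>\<in>Pis. ereal (pmf p \<pi>) *
        (\<Sum>\<phi>\<in>Phi. ereal (measure_pmf.prob \<nu> \<phi>) *
           (ereal (measure_pmf.expectation (cond_pmf \<nu> \<phi>)
                     (\<lambda>x. V (fst x) (snd x) - V (fst x) \<pi>))
            - ereal (1 / \<eta>) * enn2ereal
                (KL (mix Obs (map_pmf fst (cond_pmf \<nu> \<phi>)) \<pi>) (mix Obs \<mu> \<pi>)))))"

text \<open>DEC^KL_eta(M, Phi) = max over Mbar in co(M) (Mbar = M^mu, mu in Delta(M))
  min over p in Delta(Pi) max over nu in Delta(Psi) of DEC_obj.\<close>
definition DEC_KL ::
  "'m set \<Rightarrow> ('m \<Rightarrow> 'p \<Rightarrow> 'o pmf) \<Rightarrow> ('m \<Rightarrow> 'p \<Rightarrow> real) \<Rightarrow> 'p set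
     \<Rightarrow> ('m \<times> 'p) set set \<Rightarrow> real \<Rightarrow> ereal" where
  "DEC_KL Ms Obs V Pis Phi \<eta> =
     (SUP \<mu>\<in>{\<mu>. set_pmf \<mu> \<subseteq> Ms}. INF p\<in>{p. set_pmf p \<subseteq> Pis}.
        SUP \<nu>\<in>{\<nu>. set_pmf \<nu> \<subseteq> Psi Phi}. DEC_obj Obs V Pis Phi \<eta> \<mu> p \<nu>)"

end

theory Submission
  imports Defs
begin

text \<open>Both sides are compared with the mutual information I(phi; o) between the cell phi of
  (M, pi*) ~ nu and the observation o ~ M(.|pi).  The expected KL term of the AIR is at least
  I(phi; o) for every reference rho, with equality at the cell marginal of nu; the KL term of
  the DEC objective is at least I(phi; o) for every reference model, with equality at the
  mixture M^nu.  Hence for each (rho, nu) the AIR is bounded by the DEC objective at M^nu,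
  which gives "<=".  Conversely, for a fixed reference model every nu admits a policy whose
  DEC objective is at most the AIR of nu at its cell marginal.  The DEC objective is linear
  in the policy and, by joint convexity of KL, concave in nu, so a minimax argument over the
  finitely many policies turns this into one mixed policy good against all nu at once.
  Mixing a little of the uniform model into the reference keeps the KL terms finite at an
  arbitrarily small cost.\<close>

abbreviation pmfs_on :: "'a set \<Rightarrow> 'a pmf set" where
  "pmfs_on A \<equiv> {p. set_pmf p \<subseteq> A}"

definition mix_pmf :: "real \<Rightarrow> 'a pmf \<Rightarrow> 'a pmf \<Rightarrow> 'a pmf" where
  "mix_pmf t p q = bind_pmf (bernoulli_pmf t) (\<lambda>b. if b then p else q)"

lemma pmf_mix_pmf:
  "0 \<le> t \<Longrightarrow> t \<le> 1 \<Longrightarrow> pmf (mix_pmf t p q) x = t * pmf p x + (1 - t) * pmf q x"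
  unfolding mix_pmf_def pmf_bind
  by (subst integral_measure_pmf[of UNIV]) (auto simp: UNIV_bool)

lemma set_mix_pmf: "0 \<le> t \<Longrightarrow> t \<le> 1 \<Longrightarrow> set_pmf (mix_pmf t p q) \<subseteq> set_pmf p \<union> set_pmf q"
  by (auto simp: set_pmf_eq pmf_mix_pmf)

lemma sum_mix_pmf_return_pmf:
  assumes "finite F" "x \<notin> F" "set_pmf q \<subseteq> F" "0 \<le> t" "t \<le> 1"
  shows "(\<Sum>\<pi>\<in>insert x F. pmf (mix_pmf t q (return_pmf x)) \<pi> * f \<pi>)
           = t * (\<Sum>\<pi>\<in>F. pmf q \<pi> * f \<pi>) + (1 - t) * f x"
proof -
  have "pmf q x = 0" using assms(2,3) by (auto simp: set_pmf_eq)
  then have "pmf (mix_pmf t q (return_pmf x)) x = 1 - t" by (simp add: pmf_mix_pmf assms)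
  moreover have "(\<Sum>\<pi>\<in>F. pmf (mix_pmf t q (return_pmf x)) \<pi> * f \<pi>) = (\<Sum>\<pi>\<in>F. t * (pmf q \<pi> * f \<pi>))"
    using assms by (intro sum.cong) (auto simp: pmf_mix_pmf indicator_def)
  ultimately show ?thesis using assms(1,2) by (simp add: sum_distrib_left)
qed

section \<open>A minimax lemma for concave functions on a finite set of policies\<close>

definition concave_along :: "'a set \<Rightarrow> (real \<Rightarrow> 'a \<Rightarrow> 'a \<Rightarrow> 'a) \<Rightarrow> ('a \<Rightarrow> real) \<Rightarrow> bool" where
  "concave_along K mx f \<longleftrightarrow>
     (\<forall>a\<in>K. \<forall>b\<in>K. \<forall>t. 0 \<le> t \<and> t \<le> 1 \<longrightarrow> t * f a + (1 - t) * f b \<le> f (mx t a b))"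

lemma concave_alongD:
  "concave_along K mx f \<Longrightarrow> a \<in> K \<Longrightarrow> b \<in> K \<Longrightarrow> 0 \<le> t \<Longrightarrow> t \<le> 1 \<Longrightarrow>
     t * f a + (1 - t) * f b \<le> f (mx t a b)"
  unfolding concave_along_def by blast

lemma concave_pair_cross_le:
  assumes mx_closed: "\<And>a b t. a \<in> K \<Longrightarrow> b \<in> K \<Longrightarrow> 0 \<le> t \<Longrightarrow> t \<le> 1 \<Longrightarrow> mx t a b \<in> K"
    and u: "concave_along K mx u" and v: "concave_along K mx v"
    and min_nonpos: "\<And>a. a \<in> K \<Longrightarrow> u a \<le> 0 \<or> v a \<le> 0"
    and a: "a \<in> K" "u a > 0" and b: "b \<in> K" "v b > 0"
  shows "v b * u a \<le> u b * v a"
proof (rule ccontr)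
  assume neg: "\<not> ?thesis"
  have va: "v a \<le> 0" and ub: "u b \<le> 0" using min_nonpos a b by fastforce+
  define l1 where "l1 = - u b / (u a - u b)"
  define l2 where "l2 = v b / (v b - v a)"
  have "l1 < l2" using neg a b va ub unfolding l1_def l2_def by (simp add: divide_simps algebra_simps)
  define l where "l = (l1 + l2) / 2"
  have l1l: "l1 < l" and ll2: "l < l2" using \<open>l1 < l2\<close> unfolding l_def by auto
  have "0 \<le> l1" "l2 \<le> 1" using a b va ub unfolding l1_def l2_def by (simp_all add: divide_simps)
  then have l0: "0 \<le> l" and l1: "l \<le> 1" using l1l ll2 by auto
  have "l * (u a - u b) > l1 * (u a - u b)" using l1l a ub by (intro mult_strict_right_mono) auto
  moreover have "l1 * (u a - u b) = - u b" using a ub unfolding l1_def by (simp add: divide_simps)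
  ultimately have "u (mx l a b) > 0"
    using concave_alongD[OF u a(1) b(1) l0 l1] by (simp add: algebra_simps)
  moreover have "l * (v b - v a) < l2 * (v b - v a)" using ll2 va b by (intro mult_strict_right_mono) auto
  moreover have "l2 * (v b - v a) = v b" using va b unfolding l2_def by (simp add: divide_simps)
  ultimately have "u (mx l a b) > 0" "v (mx l a b) > 0"
    using concave_alongD[OF v a(1) b(1) l0 l1] by (simp_all add: algebra_simps)
  then show False using min_nonpos[OF mx_closed[OF a(1) b(1) l0 l1]] by linarith
qed

lemma concave_pair_common_weight:
  assumes mx_closed: "\<And>a b t. a \<in> K \<Longrightarrow> b \<in> K \<Longrightarrow> 0 \<le> t \<Longrightarrow> t \<le> 1 \<Longrightarrow> mx t a b \<in> K"
    and u: "concave_along K mx u" and v: "concave_along K mx v"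
    and min_nonpos: "\<And>a. a \<in> K \<Longrightarrow> u a \<le> 0 \<or> v a \<le> 0"
  shows "\<exists>t. 0 \<le> t \<and> t \<le> 1 \<and> (\<forall>a\<in>K. t * u a + (1 - t) * v a \<le> 0)"
proof -
  \<comment> \<open>t is the least weight that works at all points with v > 0;
    by concave_pair_cross_le it also works at the points with u > 0\<close>
  define R where "R = insert 0 ((\<lambda>b. v b / (v b - u b)) ` {b\<in>K. v b > 0})"
  define t where "t = Sup R"
  have R01: "0 \<le> r \<and> r \<le> 1" if "r \<in> R" for r
    using that min_nonpos unfolding R_def by (force simp: divide_simps)
  have tR: "r \<le> t" if "r \<in> R" for r
    unfolding t_def using that R01 by (intro cSup_upper bdd_aboveI[of _ 1]) auto
  have t01: "0 \<le> t" "t \<le> 1" using tR[of 0] R01 unfolding t_def R_def by (auto intro!: cSup_least)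
  have t_le: "t * (u a - v a) \<le> - v a" if a: "a \<in> K" "u a > 0" for a
  proof -
    have va: "v a \<le> 0" using min_nonpos a by fastforce
    have "t \<le> - v a / (u a - v a)"
      unfolding t_def
    proof (rule cSup_least)
      fix r assume "r \<in> R"
      then consider "r = 0" | b where "b \<in> K" "v b > 0" "r = v b / (v b - u b)"
        unfolding R_def by auto
      then show "r \<le> - v a / (u a - v a)"
      proof cases
        case 2
        have "u b \<le> 0" using min_nonpos 2 by fastforce
        have "v b * (u a - v a) \<le> (- v a) * (v b - u b)"
          using concave_pair_cross_le[OF mx_closed u v min_nonpos a 2(1,2)] by (simp add: algebra_simps)
        then show ?thesis unfolding 2(3) using 2 a va \<open>u b \<le> 0\<close> by (simp add: divide_simps mult.commute)
      qed (use a va in \<open>simp add: divide_simps\<close>)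
    qed (simp add: R_def)
    then show ?thesis using a va by (simp add: divide_simps)
  qed
  have "t * u a + (1 - t) * v a \<le> 0" if a: "a \<in> K" for a
  proof (cases "u a > 0")
    case True then show ?thesis using t_le[OF a True] by (simp add: algebra_simps)
  next
    case ua: False
    show ?thesis
    proof (cases "v a > 0")
      case True
      then have "v a / (v a - u a) \<le> t" using tR a unfolding R_def by auto
      then show ?thesis using True ua by (simp add: divide_simps algebra_simps)
    next
      case False
      then show ?thesis using ua t01 by (simp add: add_nonpos_nonpos mult_nonneg_nonpos)
    qed
  qed
  then show ?thesis using t01 by blast
qed

lemma concave_along_sum_pmf:
  assumes "\<And>\<pi>. \<pi> \<in> F \<Longrightarrow> concave_along K mx (g \<pi>)"
  shows "concave_along K mx (\<lambda>a. \<Sum>\<pi>\<in>F. pmf q \<pi> * g \<pi> a)"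
  unfolding concave_along_def
proof (intro ballI allI impI)
  fix a b and t :: real assume ab: "a \<in> K" "b \<in> K" and t: "0 \<le> t \<and> t \<le> 1"
  have "t * (\<Sum>\<pi>\<in>F. pmf q \<pi> * g \<pi> a) + (1 - t) * (\<Sum>\<pi>\<in>F. pmf q \<pi> * g \<pi> b)
      = (\<Sum>\<pi>\<in>F. pmf q \<pi> * (t * g \<pi> a + (1 - t) * g \<pi> b))"
    by (simp add: sum_distrib_left sum.distrib[symmetric] algebra_simps)
  also have "\<dots> \<le> (\<Sum>\<pi>\<in>F. pmf q \<pi> * g \<pi> (mx t a b))"
    using assms ab t by (intro sum_mono mult_left_mono concave_alongD[of K mx]) auto
  finally show "t * (\<Sum>\<pi>\<in>F. pmf q \<pi> * g \<pi> a) + (1 - t) * (\<Sum>\<pi>\<in>F. pmf q \<pi> * g \<pi> b)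
      \<le> (\<Sum>\<pi>\<in>F. pmf q \<pi> * g \<pi> (mx t a b))" .
qed

lemma concave_along_minus_const:
  "concave_along K mx f \<Longrightarrow> concave_along K mx (\<lambda>a. f a - c)"
  unfolding concave_along_def by (auto simp: algebra_simps)

text \<open>In the induction step, the policies of F are first mixed to handle the points where
  the new policy x fails; that mixture and x are then combined by a common weight.\<close>

lemma finite_minimax_concave:
  fixes g :: "'p \<Rightarrow> 'a \<Rightarrow> real"
  assumes "finite P" "P \<noteq> {}"
    and mx_closed: "\<And>a b t. a \<in> K \<Longrightarrow> b \<in> K \<Longrightarrow> 0 \<le> t \<Longrightarrow> t \<le> 1 \<Longrightarrow> mx t a b \<in> K"
    and concave: "\<And>\<pi>. \<pi> \<in> P \<Longrightarrow> concave_along K mx (g \<pi>)"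
    and pointwise: "\<And>a. a \<in> K \<Longrightarrow> \<exists>\<pi>\<in>P. g \<pi> a \<le> c"
  shows "\<exists>q\<in>pmfs_on P. \<forall>a\<in>K. (\<Sum>\<pi>\<in>P. pmf q \<pi> * g \<pi> a) \<le> c"
  using assms(1,2) mx_closed concave pointwise
proof (induction P arbitrary: K rule: finite_ne_induct)
  case (singleton x)
  show ?case using singleton.prems(3) by (intro bexI[of _ "return_pmf x"]) auto
next
  case (insert x F)
  define K' where "K' = {a\<in>K. c < g x a}"
  have "\<exists>q\<in>pmfs_on F. \<forall>a\<in>K'. (\<Sum>\<pi>\<in>F. pmf q \<pi> * g \<pi> a) \<le> c"
  proof (rule insert.IH)
    fix a b and t :: real assume ab: "a \<in> K'" "b \<in> K'" and t: "0 \<le> t" "t \<le> 1"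
    have gab: "c < g x a" "c < g x b" using ab unfolding K'_def by auto
    have "c < t * g x a + (1 - t) * g x b"
    proof (cases "t = 1")
      case False
      have "t * c \<le> t * g x a" "(1 - t) * c < (1 - t) * g x b"
        using gab t False by (auto intro: mult_left_mono mult_strict_left_mono)
      then show ?thesis by (simp add: algebra_simps)
    qed (use gab in simp)
    also have "\<dots> \<le> g x (mx t a b)"
      using ab t insert.prems(2)[of x] unfolding K'_def by (auto intro: concave_alongD)
    finally show "mx t a b \<in> K'" using ab t insert.prems(1) unfolding K'_def by auto
  next
    show "\<pi> \<in> F \<Longrightarrow> concave_along K' mx (g \<pi>)" for \<pi>
      using insert.prems(2)[of \<pi>] unfolding concave_along_def K'_def by auto
  next
    show "a \<in> K' \<Longrightarrow> \<exists>\<pi>\<in>F. g \<pi> a \<le> c" for a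
      using insert.prems(3)[of a] unfolding K'_def by auto
  qed
  then obtain q where q: "set_pmf q \<subseteq> F" and q_le: "\<forall>a\<in>K'. (\<Sum>\<pi>\<in>F. pmf q \<pi> * g \<pi> a) \<le> c"
    by blast
  have "\<exists>t. 0 \<le> t \<and> t \<le> 1 \<and>
      (\<forall>a\<in>K. t * ((\<Sum>\<pi>\<in>F. pmf q \<pi> * g \<pi> a) - c) + (1 - t) * (g x a - c) \<le> 0)"
  proof (rule concave_pair_common_weight[OF insert.prems(1)])
    show "concave_along K mx (\<lambda>a. (\<Sum>\<pi>\<in>F. pmf q \<pi> * g \<pi> a) - c)"
      using insert.prems(2) by (intro concave_along_minus_const concave_along_sum_pmf) auto
    show "concave_along K mx (\<lambda>a. g x a - c)"
      using insert.prems(2) by (intro concave_along_minus_const) auto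
    show "a \<in> K \<Longrightarrow> (\<Sum>\<pi>\<in>F. pmf q \<pi> * g \<pi> a) - c \<le> 0 \<or> g x a - c \<le> 0" for a
      using q_le unfolding K'_def by force
  qed
  then obtain t where t: "0 \<le> t" "t \<le> 1"
    and t_le: "\<forall>a\<in>K. t * ((\<Sum>\<pi>\<in>F. pmf q \<pi> * g \<pi> a) - c) + (1 - t) * (g x a - c) \<le> 0"
    by blast
  have "\<forall>a\<in>K. (\<Sum>\<pi>\<in>insert x F. pmf (mix_pmf t q (return_pmf x)) \<pi> * g \<pi> a) \<le> c"
    using t_le unfolding sum_mix_pmf_return_pmf[OF insert.hyps(1) insert.hyps(3) q t]
    by (simp add: algebra_simps)
  moreover have "set_pmf (mix_pmf t q (return_pmf x)) \<subseteq> insert x F"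
    using set_mix_pmf[OF t, of q "return_pmf x"] q by auto
  ultimately show ?case by blast
qed

section \<open>Bounds on the KL divergence\<close>

lemma kl_integrand_nonneg: "0 < (a::real) \<Longrightarrow> 0 < b \<Longrightarrow> 0 \<le> a * ln (a / b) + b - a"
proof -
  assume a: "0 < a" and b: "0 < b"
  have "a * ln (b / a) \<le> a * (b / a - 1)" using a b by (intro mult_left_mono ln_le_minus_one) auto
  moreover have "ln (a / b) = - ln (b / a)" using a b by (simp add: ln_div)
  moreover have "a * (b / a - 1) = b - a" using a by (simp add: field_simps)
  ultimately show ?thesis by simp
qed

lemma ennreal_add_cancel_right_le: "(x::ennreal) + c \<le> y + c \<Longrightarrow> c \<noteq> \<infinity> \<Longrightarrow> x \<le> y"
  by (simp add: add.commute[of _ c] ennreal_add_left_cancel_le)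

lemma nn_integral_pmf_count_space: "(\<integral>\<^sup>+ x. ennreal (pmf P x) \<partial>count_space UNIV) = 1"
  by (simp add: nn_integral_pmf measure_pmf.emeasure_space_1[simplified])

lemma kl_term_shift:
  assumes "0 \<le> a" "0 \<le> b" "0 < k" "k * b \<le> b'" "k \<le> 1"
  shows "kl_term a b' + ennreal b \<le> kl_term a b + ennreal (a * ln (1 / k)) + ennreal b'"
proof (cases "a = 0 \<or> b = 0")
  case True then show ?thesis using assms by (auto simp: kl_term_def add.commute)
next
  case False
  then have a: "a > 0" and b: "b > 0" and b': "b' > 0"
    using assms by (auto intro: less_le_trans[of 0 "k * b"])
  have "ln (a / b') \<le> ln (a / (k * b))" using a b b' assms by (intro ln_mono) (auto simp: divide_simps mult.commute)
  also have "\<dots> = ln (a / b) + ln (1 / k)" using a b assms by (simp add: ln_div ln_mult)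
  finally have "a * ln (a / b') \<le> a * (ln (a / b) + ln (1 / k))" using a by (intro mult_left_mono) auto
  then have "ennreal (a * ln (a / b') + b' - a + b) \<le> ennreal (a * ln (a / b) + b - a + a * ln (1 / k) + b')"
    by (intro ennreal_leI) (simp add: distrib_left)
  then show ?thesis
    using a b b' assms kl_integrand_nonneg[OF a b] kl_integrand_nonneg[OF a b']
    by (simp add: kl_term_def ennreal_plus[symmetric] del: ennreal_plus)
qed

lemma KL_shift_reference:
  assumes "0 < k" "k \<le> 1" "\<And>x. k * pmf Q x \<le> pmf Q' x"
  shows "KL P Q' \<le> KL P Q + ennreal (ln (1 / k))"
proof -
  have "KL P Q' + 1 = (\<integral>\<^sup>+ x. kl_term (pmf P x) (pmf Q' x) + ennreal (pmf Q x) \<partial>count_space UNIV)"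
    unfolding KL_def KLf_def by (subst nn_integral_add) (auto simp: nn_integral_pmf_count_space)
  also have "\<dots> \<le> (\<integral>\<^sup>+ x. kl_term (pmf P x) (pmf Q x) + ennreal (ln (1 / k)) * ennreal (pmf P x)
                       + ennreal (pmf Q' x) \<partial>count_space UNIV)"
    using assms kl_term_shift[of "pmf P _" "pmf Q _" k]
    by (intro nn_integral_mono) (simp add: ennreal_mult'[symmetric] mult.commute)
  also have "\<dots> = KL P Q + ennreal (ln (1 / k)) + 1"
    unfolding KL_def KLf_def
    by (simp add: nn_integral_add nn_integral_cmult nn_integral_pmf_count_space)
  finally show ?thesis by (rule ennreal_add_cancel_right_le) simp
qed

lemma kl_term_ratio_bound:
  assumes "0 \<le> a" "0 \<le> b" "a \<le> C * b" "1 \<le> C"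
  shows "kl_term a b + ennreal a \<le> ennreal (a * ln C) + ennreal b"
proof (cases "a = 0")
  case True then show ?thesis by (simp add: kl_term_def)
next
  case False
  then have a: "a > 0" and b: "b > 0" using assms by (auto intro: ccontr)
  have "a * ln (a / b) \<le> a * ln C"
    using a b assms by (intro mult_left_mono ln_mono) (auto simp: divide_simps mult.commute)
  then have "ennreal (a * ln (a / b) + b - a + a) \<le> ennreal (a * ln C + b)" by (intro ennreal_leI) linarith
  then show ?thesis using a b assms kl_integrand_nonneg[OF a b]
    by (simp add: kl_term_def ennreal_plus[symmetric] del: ennreal_plus)
qed

lemma KL_le_ln_of_ratio_bound:
  assumes "1 \<le> C" "\<And>x. pmf P x \<le> C * pmf Q x"
  shows "KL P Q \<le> ennreal (ln C)"
proof -
  have "KL P Q + 1 = (\<integral>\<^sup>+ x. kl_term (pmf P x) (pmf Q x) + ennreal (pmf P x) \<partial>count_space UNIV)"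
    unfolding KL_def KLf_def by (subst nn_integral_add) (auto simp: nn_integral_pmf_count_space)
  also have "\<dots> \<le> (\<integral>\<^sup>+ x. ennreal (ln C) * ennreal (pmf P x) + ennreal (pmf Q x) \<partial>count_space UNIV)"
    using assms kl_term_ratio_bound[of "pmf P _" "pmf Q _" C]
    by (intro nn_integral_mono) (simp add: ennreal_mult'[symmetric] mult.commute)
  also have "\<dots> = ennreal (ln C) + 1"
    by (simp add: nn_integral_add nn_integral_cmult nn_integral_pmf_count_space)
  finally show ?thesis by (rule ennreal_add_cancel_right_le) simp
qed

section \<open>The perspective of the KL integrand\<close>

definition xlog_ratio :: "real \<Rightarrow> real \<Rightarrow> real" where
  "xlog_ratio x y = (if x = 0 then 0 else x * ln (x / y))"

lemma xlog_ratio_scale: "0 < t \<Longrightarrow> xlog_ratio (t * x) (t * y) = t * xlog_ratio x y"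
  by (simp add: xlog_ratio_def)

lemma xlog_ratio_ge_tangent:
  assumes "0 \<le> x" "0 \<le> y" "y = 0 \<longrightarrow> x = 0" "0 < S" "0 < T"
  shows "x * ln (S / T) + x - y * S / T \<le> xlog_ratio x y"
proof (cases "x = 0")
  case True then show ?thesis using assms by (simp add: xlog_ratio_def)
next
  case False
  then have x: "x > 0" and y: "y > 0" using assms by auto
  define z where "z = x * T / (y * S)"
  have z: "z > 0" unfolding z_def using x y assms by auto
  have "ln (1 / z) \<le> 1 / z - 1" using z by (intro ln_le_minus_one) auto
  then have "x * (1 - 1 / z) \<le> x * ln z" using x z by (intro mult_left_mono) (auto simp: ln_div)
  moreover have "x * (1 - 1 / z) = x - y * S / T" unfolding z_def using x y assms by (simp add: field_simps)
  moreover have "ln z = ln (x / y) - ln (S / T)" unfolding z_def using x y assms by (simp add: ln_div ln_mult)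
  ultimately show ?thesis using False by (simp add: xlog_ratio_def algebra_simps)
qed

lemma log_sum_inequality:
  assumes "0 \<le> x1" "0 \<le> x2" "0 \<le> y1" "0 \<le> y2" "y1 = 0 \<longrightarrow> x1 = 0" "y2 = 0 \<longrightarrow> x2 = 0"
  shows "xlog_ratio (x1 + x2) (y1 + y2) \<le> xlog_ratio x1 y1 + xlog_ratio x2 y2"
proof (cases "x1 + x2 = 0")
  case True then show ?thesis using assms by (simp add: xlog_ratio_def)
next
  case False
  then have S: "0 < x1 + x2" and T: "0 < y1 + y2" using assms by auto
  have "y1 * (x1 + x2) / (y1 + y2) + y2 * (x1 + x2) / (y1 + y2) = x1 + x2"
    using T by (simp add: add_divide_distrib[symmetric] distrib_right[symmetric])
  then show ?thesis
    using xlog_ratio_ge_tangent[OF assms(1,3,5) S T] xlog_ratio_ge_tangent[OF assms(2,4,6) S T] False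
    by (simp add: xlog_ratio_def algebra_simps)
qed

lemma xlog_ratio_convex:
  assumes t: "0 \<le> t" "t \<le> 1" and nn: "0 \<le> x1" "0 \<le> x2" "0 \<le> y1" "0 \<le> y2"
    and z: "y1 = 0 \<longrightarrow> x1 = 0" "y2 = 0 \<longrightarrow> x2 = 0"
  shows "xlog_ratio (t * x1 + (1 - t) * x2) (t * y1 + (1 - t) * y2)
           \<le> t * xlog_ratio x1 y1 + (1 - t) * xlog_ratio x2 y2"
proof (cases "t = 0 \<or> t = 1")
  case True then show ?thesis by auto
next
  case False
  then have "0 < t" "0 < 1 - t" using t by auto
  then show ?thesis
    using log_sum_inequality[of "t * x1" "(1 - t) * x2" "t * y1" "(1 - t) * y2"] nn z
    by (simp add: xlog_ratio_scale)
qed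

text \<open>For a cell of weight w whose joint mass with an observation is a, kl_persp w a q is
  that observation's contribution to the cell-weighted KL divergence from the reference q.\<close>

definition kl_persp :: "real \<Rightarrow> real \<Rightarrow> real \<Rightarrow> ennreal" where
  "kl_persp w a q = ennreal w * kl_term (a / w) q"

definition kl_persp_real :: "real \<Rightarrow> real \<Rightarrow> real \<Rightarrow> real" where
  "kl_persp_real w a q = xlog_ratio a (w * q) + w * q - a"

lemma kl_persp_real_nonneg:
  "0 \<le> w \<Longrightarrow> 0 \<le> a \<Longrightarrow> (w = 0 \<longrightarrow> a = 0) \<Longrightarrow> 0 < q \<Longrightarrow> 0 \<le> kl_persp_real w a q"
  unfolding kl_persp_real_def xlog_ratio_def using kl_integrand_nonneg[of a "w * q"]
  by (cases "a = 0") auto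

lemma kl_persp_eq_real:
  assumes "0 \<le> w" "0 \<le> a" "w = 0 \<longrightarrow> a = 0" "0 < q"
  shows "kl_persp w a q = ennreal (kl_persp_real w a q)"
proof (cases "a = 0")
  case True then show ?thesis
    using assms by (simp add: kl_persp_def kl_term_def kl_persp_real_def xlog_ratio_def ennreal_mult'[symmetric])
next
  case False
  then have a: "a > 0" and w: "w > 0" using assms by auto
  have "kl_persp w a q = ennreal (w * (a / w * ln (a / w / q) + q - a / w))"
    unfolding kl_persp_def kl_term_def using a w assms kl_integrand_nonneg[of "a / w" q]
    by (simp add: ennreal_mult)
  also have "w * (a / w * ln (a / w / q) + q - a / w) = kl_persp_real w a q"
    unfolding kl_persp_real_def xlog_ratio_def using a w by (simp add: field_simps)
  finally show ?thesis .
qed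

lemma kl_persp_zero_reference:
  "0 \<le> w \<Longrightarrow> 0 \<le> a \<Longrightarrow> (w = 0 \<longrightarrow> a = 0) \<Longrightarrow> kl_persp w a 0 = (if a = 0 then 0 else \<infinity>)"
  by (auto simp: kl_persp_def kl_term_def ennreal_mult_top)

lemma kl_persp_zero_mass: "0 \<le> w \<Longrightarrow> kl_persp w 0 q = ennreal (w * q)"
  by (simp add: kl_persp_def kl_term_def ennreal_mult')

lemma kl_persp_swap:
  assumes "0 \<le> a" "a \<le> m" "0 \<le> w" "w = 0 \<longrightarrow> a = 0"
  shows "kl_persp w a m = kl_persp m a w"
proof (cases "a = 0")
  case True then show ?thesis using assms by (simp add: kl_persp_zero_mass mult.commute)
next
  case False
  then have "0 < m" "0 < w" using assms by auto
  then show ?thesis using assms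
    by (simp add: kl_persp_eq_real kl_persp_real_def mult.commute)
qed

lemma kl_persp_convex:
  assumes t: "0 \<le> t" "t \<le> 1" and nn: "0 \<le> a1" "0 \<le> a2" "0 \<le> w1" "0 \<le> w2"
    and z: "w1 = 0 \<longrightarrow> a1 = 0" "w2 = 0 \<longrightarrow> a2 = 0" and q: "0 \<le> q"
  shows "kl_persp (t * w1 + (1 - t) * w2) (t * a1 + (1 - t) * a2) q
           \<le> ennreal t * kl_persp w1 a1 q + ennreal (1 - t) * kl_persp w2 a2 q"
proof (cases "t = 0 \<or> t = 1")
  case True then show ?thesis by auto
next
  case False
  then have t01: "0 < t" "t < 1" using t by auto
  have W: "0 \<le> t * w1 + (1 - t) * w2" "0 \<le> t * a1 + (1 - t) * a2"
    "t * w1 + (1 - t) * w2 = 0 \<longrightarrow> t * a1 + (1 - t) * a2 = 0"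
    using t01 nn z by (auto simp: add_nonneg_eq_0_iff)
  show ?thesis
  proof (cases "q = 0")
    case True
    then show ?thesis
      using kl_persp_zero_reference[OF W] kl_persp_zero_reference[OF nn(3,1) z(1)]
        kl_persp_zero_reference[OF nn(4,2) z(2)] t01
      by (auto simp: ennreal_mult_top)
  next
    case False
    then have q0: "q > 0" using q by auto
    have "xlog_ratio (t * a1 + (1 - t) * a2) ((t * w1 + (1 - t) * w2) * q)
        \<le> t * xlog_ratio a1 (w1 * q) + (1 - t) * xlog_ratio a2 (w2 * q)"
      using xlog_ratio_convex[OF t nn(1,2), of "w1 * q" "w2 * q"] nn z q0
      by (simp add: algebra_simps)
    then have "kl_persp_real (t * w1 + (1 - t) * w2) (t * a1 + (1 - t) * a2) q
        \<le> t * kl_persp_real w1 a1 q + (1 - t) * kl_persp_real w2 a2 q"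
      unfolding kl_persp_real_def by (simp add: algebra_simps)
    then show ?thesis
      using kl_persp_eq_real[OF W q0] kl_persp_eq_real[OF nn(3,1) z(1) q0] kl_persp_eq_real[OF nn(4,2) z(2) q0]
        kl_persp_real_nonneg[OF nn(3,1) z(1) q0] kl_persp_real_nonneg[OF nn(4,2) z(2) q0] t
      by (simp add: ennreal_mult'[symmetric] ennreal_plus[symmetric] ennreal_leI del: ennreal_plus)
  qed
qed

text \<open>Moving the reference from s to q changes kl_persp by a * ln (s / q) + w * (q - s);
  the terms are distributed over both sides so that all of them are nonnegative.\<close>

lemma kl_persp_change_reference:
  assumes "0 \<le> w" "0 \<le> a" "w = 0 \<longrightarrow> a = 0" "0 < s" "0 < q"
  defines "c \<equiv> ln (s / q)"
  shows "kl_persp w a q + ennreal (w * s) + ennreal (a * max 0 (- c))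
           = kl_persp w a s + ennreal (w * q) + ennreal (a * max 0 c)"
proof -
  have "xlog_ratio a (w * q) = xlog_ratio a (w * s) + a * c"
  proof (cases "a = 0")
    case False
    then have "0 < a" "0 < w" using assms by auto
    then have "ln (a / (w * q)) = ln (a / (w * s)) + c" unfolding c_def using assms by (simp add: ln_div ln_mult)
    then show ?thesis using False by (simp add: xlog_ratio_def algebra_simps)
  qed (simp add: xlog_ratio_def)
  then have "kl_persp_real w a q + w * s + a * max 0 (- c) = kl_persp_real w a s + w * q + a * max 0 c"
    unfolding kl_persp_real_def by (simp add: max_def algebra_simps)
  then show ?thesis
    using assms kl_persp_real_nonneg[of w a q] kl_persp_real_nonneg[of w a s]
    by (simp add: kl_persp_eq_real ennreal_plus[symmetric] del: ennreal_plus)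
qed

text \<open>Gibbs' inequality in perspective form: the reference minimising the total
  contribution of the masses a is their total s.\<close>

lemma nn_integral_kl_persp_min:
  assumes w: "\<And>i. i \<in> I \<Longrightarrow> 0 \<le> w i" and a: "\<And>i. i \<in> I \<Longrightarrow> 0 \<le> a i"
    and wa: "\<And>i. i \<in> I \<Longrightarrow> w i = 0 \<longrightarrow> a i = 0"
    and int_w: "(\<integral>\<^sup>+ i. ennreal (w i) \<partial>count_space I) = 1"
    and int_a: "(\<integral>\<^sup>+ i. ennreal (a i) \<partial>count_space I) = ennreal s"
    and s: "0 \<le> s" and q: "0 \<le> q"
  shows "(\<integral>\<^sup>+ i. kl_persp (w i) (a i) s \<partial>count_space I) \<le> (\<integral>\<^sup>+ i. kl_persp (w i) (a i) q \<partial>count_space I)"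
proof -
  have a_le: "ennreal (a i) \<le> ennreal s" if "i \<in> I" for i
    using nn_integral_ge_point[OF that, of "\<lambda>i. ennreal (a i)"] int_a by simp
  consider "s = 0" | "0 < s" "q = 0" | "0 < s" "0 < q" using s q by linarith
  then show ?thesis
  proof cases
    case 1
    then have "\<forall>i\<in>I. kl_persp (w i) (a i) s = 0" using w a a_le by (simp add: kl_persp_zero_mass)
    then have "(\<integral>\<^sup>+ i. kl_persp (w i) (a i) s \<partial>count_space I) = 0"
      by (subst nn_integral_cong[of _ _ "\<lambda>_. 0"]) auto
    then show ?thesis by simp
  next
    case 2
    have "\<exists>i\<in>I. 0 < a i"
    proof (rule ccontr)
      assume "\<not> ?thesis"
      then have "(\<integral>\<^sup>+ i. ennreal (a i) \<partial>count_space I) = 0"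
        by (subst nn_integral_cong[of _ _ "\<lambda>_. 0"]) (auto simp: not_less ennreal_eq_0_iff)
      then show False using int_a 2 by simp
    qed
    then obtain i where i: "i \<in> I" "0 < a i" by blast
    then have "kl_persp (w i) (a i) q = \<infinity>" using kl_persp_zero_reference[of "w i" "a i"] w a wa 2 by auto
    then show ?thesis using nn_integral_ge_point[OF i(1), of "\<lambda>i. kl_persp (w i) (a i) q"] by (simp add: top_unique)
  next
    case 3
    define cp where "cp = max 0 (ln (s / q))"
    define cm where "cm = max 0 (- ln (s / q))"
    have cpm: "0 \<le> cp" "0 \<le> cm" "cp - cm = ln (s / q)" unfolding cp_def cm_def by auto
    let ?int = "\<lambda>f. \<integral>\<^sup>+ i. f i \<partial>count_space I"
    have int_w_mult: "?int (\<lambda>i. ennreal (w i * k)) = ennreal k" if "0 \<le> k" for k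
      using that int_w by (simp add: ennreal_mult'' nn_integral_multc)
    have int_a_mult: "?int (\<lambda>i. ennreal (a i * k)) = ennreal (s * k)" if "0 \<le> k" for k
      using that int_a s by (simp add: ennreal_mult'' nn_integral_multc)
    have "?int (\<lambda>i. kl_persp (w i) (a i) q) + (ennreal s + ennreal (s * cm))
        = ?int (\<lambda>i. kl_persp (w i) (a i) q + ennreal (w i * s) + ennreal (a i * cm))"
      using 3 cpm by (simp add: nn_integral_add int_w_mult int_a_mult add.assoc)
    also have "\<dots> = ?int (\<lambda>i. kl_persp (w i) (a i) s + ennreal (w i * q) + ennreal (a i * cp))"
      using w a wa 3 by (intro nn_integral_cong) (simp add: kl_persp_change_reference cp_def cm_def)
    also have "\<dots> = ?int (\<lambda>i. kl_persp (w i) (a i) s) + (ennreal q + ennreal (s * cp))"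
      using 3 cpm by (simp add: nn_integral_add int_w_mult int_a_mult add.assoc)
    finally have eq: "?int (\<lambda>i. kl_persp (w i) (a i) s) + (ennreal q + ennreal (s * cp))
        = ?int (\<lambda>i. kl_persp (w i) (a i) q) + (ennreal s + ennreal (s * cm))" ..
    have "s + s * cm \<le> q + s * cp"
      using kl_integrand_nonneg[of s q] 3 cpm by (simp add: algebra_simps flip: right_diff_distrib)
    then have "ennreal s + ennreal (s * cm) \<le> ennreal q + ennreal (s * cp)"
      using 3 cpm by (simp add: ennreal_plus[symmetric] ennreal_leI del: ennreal_plus)
    then have "?int (\<lambda>i. kl_persp (w i) (a i) s) + (ennreal s + ennreal (s * cm))
        \<le> ?int (\<lambda>i. kl_persp (w i) (a i) q) + (ennreal s + ennreal (s * cm))"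
      unfolding eq[symmetric] by (rule add_left_mono)
    then show ?thesis by (rule ennreal_add_cancel_right_le) (simp add: ennreal_plus[symmetric] del: ennreal_plus)
  qed
qed

lemma ereal_minus_enn2ereal_add:
  "(ereal r - enn2ereal X) + (ereal R - enn2ereal Y) = ereal (r + R) - enn2ereal (X + Y)"
proof (cases "X = top \<or> Y = top")
  case True
  have "ereal r - enn2ereal X \<noteq> \<infinity>" "ereal R - enn2ereal Y \<noteq> \<infinity>"
    using enn2ereal_nonneg[of X] enn2ereal_nonneg[of Y]
    by (cases "enn2ereal X"; auto) (cases "enn2ereal Y"; auto)
  then show ?thesis using True by (auto simp: plus_ennreal.rep_eq)
next
  case False
  then obtain x y where "X = ennreal x" "Y = ennreal y" "0 \<le> x" "0 \<le> y"
    by (metis ennreal_cases top.extremum_unique infinity_ennreal_def order_top_class.top_greatest)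
  then show ?thesis by (simp del: ennreal_plus add: ennreal_plus[symmetric])
qed

lemma ereal_mult_minus_enn2ereal:
  assumes "0 \<le> a" "0 \<le> c"
  shows "ereal a * (ereal b - ereal c * enn2ereal e) = ereal (a * b) - enn2ereal (ennreal (a * c) * e)"
proof (cases "a = 0")
  case True then show ?thesis by (simp add: zero_ennreal.rep_eq zero_ereal_def[symmetric])
next
  case a: False
  show ?thesis
  proof (cases "e = top")
    case True
    show ?thesis
    proof (cases "c = 0")
      case True then show ?thesis using \<open>e = top\<close> by (simp add: zero_ennreal.rep_eq zero_ereal_def[symmetric])
    next
      case False
      then show ?thesis using \<open>e = top\<close> a assms by (simp add: ennreal_mult_top times_ennreal.rep_eq)
    qed
  next
    case False
    then obtain y where y: "e = ennreal y" "0 \<le> y" by (cases e rule: ennreal_cases) auto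
    have "ennreal (a * c) * ennreal y = ennreal (a * c * y)" using assms y by (simp add: ennreal_mult)
    then show ?thesis using y assms by (simp add: algebra_simps)
  qed
qed

lemma sum_ereal_minus_enn2ereal:
  "finite S \<Longrightarrow> (\<Sum>x\<in>S. ereal (r x) - enn2ereal (X x)) = ereal (\<Sum>x\<in>S. r x) - enn2ereal (\<Sum>x\<in>S. X x)"
proof (induction S rule: finite_induct)
  case empty then show ?case by (simp add: zero_ennreal.rep_eq)
next
  case (insert a S)
  then show ?case using ereal_minus_enn2ereal_add by simp
qed

lemma sum_ereal_mult_minus_enn2ereal:
  assumes "finite S" "\<And>x. x \<in> S \<Longrightarrow> 0 \<le> a x" "0 \<le> c"
  shows "(\<Sum>x\<in>S. ereal (a x) * (ereal (b x) - ereal c * enn2ereal (e x)))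
       = ereal (\<Sum>x\<in>S. a x * b x) - enn2ereal (ennreal c * (\<Sum>x\<in>S. ennreal (a x) * e x))"
proof -
  have "(\<Sum>x\<in>S. ereal (a x) * (ereal (b x) - ereal c * enn2ereal (e x)))
      = (\<Sum>x\<in>S. ereal (a x * b x) - enn2ereal (ennreal (a x * c) * e x))"
    using assms by (intro sum.cong refl ereal_mult_minus_enn2ereal) auto
  also have "\<dots> = ereal (\<Sum>x\<in>S. a x * b x) - enn2ereal (\<Sum>x\<in>S. ennreal (a x * c) * e x)"
    by (rule sum_ereal_minus_enn2ereal[OF assms(1)])
  also have "(\<Sum>x\<in>S. ennreal (a x * c) * e x) = ennreal c * (\<Sum>x\<in>S. ennreal (a x) * e x)"
    unfolding sum_distrib_left using assms
    by (intro sum.cong refl) (simp add: ennreal_mult mult.assoc mult.left_commute)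
  finally show ?thesis .
qed

lemma sum_pmf_ereal_ge_Min:
  assumes "finite P" "set_pmf p \<subseteq> P" and not_PInf: "\<And>\<pi>. \<pi> \<in> P \<Longrightarrow> a \<pi> \<noteq> \<infinity>"
  shows "Min (a ` P) \<le> (\<Sum>\<pi>\<in>P. ereal (pmf p \<pi>) * a \<pi>)"
proof -
  have "P \<noteq> {}" using assms(2) set_pmf_not_empty[of p] by blast
  then have "Min (a ` P) \<in> a ` P" using assms(1) by simp
  then obtain \<pi>0 where \<pi>0: "\<pi>0 \<in> P" "a \<pi>0 = Min (a ` P)" by auto
  show ?thesis
  proof (cases "a \<pi>0")
    case (real r)
    have "(\<Sum>\<pi>\<in>P. ereal (pmf p \<pi>) * a \<pi>0) \<le> (\<Sum>\<pi>\<in>P. ereal (pmf p \<pi>) * a \<pi>)"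
      using \<pi>0 assms(1) by (intro sum_mono ereal_mult_left_mono) auto
    moreover have "(\<Sum>\<pi>\<in>P. ereal (pmf p \<pi>) * a \<pi>0) = a \<pi>0"
      using real sum_pmf_eq_1[OF assms(1,2)] by (simp add: sum_distrib_right[symmetric])
    ultimately show ?thesis using \<pi>0 by simp
  qed (use \<pi>0 not_PInf in auto)
qed

section \<open>Cells, observations and the information terms\<close>

locale air_dec =
  fixes Ms :: "'m set" and Pis :: "'p set" and Obs :: "'m \<Rightarrow> 'p \<Rightarrow> 'o pmf" and V :: "'m \<Rightarrow> 'p \<Rightarrow> real"
    and Phi :: "('m \<times> 'p) set set" and \<eta> :: real
  assumes finite_Ms: "finite Ms" and Ms_nonempty: "Ms \<noteq> {}"
    and finite_Pis: "finite Pis" and Pis_nonempty: "Pis \<noteq> {}"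
    and cell_subset: "\<And>\<phi>. \<phi> \<in> Phi \<Longrightarrow> \<phi> \<subseteq> Ms \<times> Pis"
    and cells_disjoint: "\<And>\<phi> \<phi>'. \<phi> \<in> Phi \<Longrightarrow> \<phi>' \<in> Phi \<Longrightarrow> \<phi> \<noteq> \<phi>' \<Longrightarrow> \<phi> \<inter> \<phi>' = {}"
    and eta_pos: "\<eta> > 0"
begin

text \<open>Under the joint law of (M, pi*) ~ nu and o ~ M(.|pi), cell_obs is the probability
  of the cell phi together with the observation o, and obs_marg that of o alone.\<close>

definition cell_obs :: "('m \<times> 'p) pmf \<Rightarrow> 'p \<Rightarrow> ('m \<times> 'p) set \<Rightarrow> 'o \<Rightarrow> real" where
  "cell_obs \<nu> \<pi> \<phi> ob = (\<Sum>x\<in>\<phi>. pmf \<nu> x * pmf (Obs (fst x) \<pi>) ob)"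

definition obs_marg :: "('m \<times> 'p) pmf \<Rightarrow> 'p \<Rightarrow> 'o \<Rightarrow> real" where
  "obs_marg \<nu> \<pi> ob = (\<Sum>\<phi>\<in>Phi. cell_obs \<nu> \<pi> \<phi> ob)"

abbreviation cell_wt :: "('m \<times> 'p) pmf \<Rightarrow> ('m \<times> 'p) set \<Rightarrow> real" where
  "cell_wt \<nu> \<phi> \<equiv> measure_pmf.prob \<nu> \<phi>"

lemma finite_Phi: "finite Phi"
proof -
  have "Phi \<subseteq> Pow (Ms \<times> Pis)" using cell_subset by auto
  then show ?thesis using finite_Ms finite_Pis by (meson finite_Pow_iff finite_SigmaI finite_subset)
qed

lemma finite_cell: "\<phi> \<in> Phi \<Longrightarrow> finite \<phi>"
  using cell_subset finite_Ms finite_Pis by (meson finite_SigmaI finite_subset)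

lemma Psi_subset: "Psi Phi \<subseteq> Ms \<times> Pis"
  using cell_subset unfolding Psi_def by auto

lemma finite_Psi: "finite (Psi Phi)"
  using Psi_subset finite_Ms finite_Pis by (meson finite_SigmaI finite_subset)

lemma sum_Psi: "(\<Sum>x\<in>Psi Phi. f x) = (\<Sum>\<phi>\<in>Phi. \<Sum>x\<in>\<phi>. f x)"
  unfolding Psi_def using finite_cell cells_disjoint by (subst sum.Union_disjoint) auto

lemma cell_wt_eq: "\<phi> \<in> Phi \<Longrightarrow> cell_wt \<nu> \<phi> = (\<Sum>x\<in>\<phi>. pmf \<nu> x)"
  using finite_cell by (simp add: measure_measure_pmf_finite)

lemma sum_cell_wt: "set_pmf \<nu> \<subseteq> Psi Phi \<Longrightarrow> (\<Sum>\<phi>\<in>Phi. cell_wt \<nu> \<phi>) = 1"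
  using sum_pmf_eq_1[OF finite_Psi, of \<nu>] sum_Psi[of "pmf \<nu>"] by (simp add: cell_wt_eq)

lemma cell_obs_nonneg: "0 \<le> cell_obs \<nu> \<pi> \<phi> ob"
  unfolding cell_obs_def by (intro sum_nonneg) auto

lemma cell_obs_zero_weight: "\<phi> \<in> Phi \<Longrightarrow> cell_wt \<nu> \<phi> = 0 \<Longrightarrow> cell_obs \<nu> \<pi> \<phi> ob = 0"
  using finite_cell by (simp add: cell_wt_eq cell_obs_def sum_nonneg_eq_0_iff)

lemma cell_obs_le_obs_marg: "\<phi> \<in> Phi \<Longrightarrow> cell_obs \<nu> \<pi> \<phi> ob \<le> obs_marg \<nu> \<pi> ob"
  unfolding obs_marg_def using finite_Phi cell_obs_nonneg by (intro member_le_sum) auto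

lemma obs_marg_eq: "obs_marg \<nu> \<pi> ob = (\<Sum>x\<in>Psi Phi. pmf \<nu> x * pmf (Obs (fst x) \<pi>) ob)"
  unfolding obs_marg_def cell_obs_def by (rule sum_Psi[symmetric])

lemma nn_integral_cell_obs:
  assumes "\<phi> \<in> Phi"
  shows "(\<integral>\<^sup>+ ob. ennreal (cell_obs \<nu> \<pi> \<phi> ob) \<partial>count_space UNIV) = ennreal (cell_wt \<nu> \<phi>)"
proof -
  have "(\<integral>\<^sup>+ ob. ennreal (cell_obs \<nu> \<pi> \<phi> ob) \<partial>count_space UNIV)
      = (\<Sum>x\<in>\<phi>. ennreal (pmf \<nu> x) * (\<integral>\<^sup>+ ob. ennreal (pmf (Obs (fst x) \<pi>) ob) \<partial>count_space UNIV))"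
    unfolding cell_obs_def
    by (simp add: sum_ennreal[symmetric] nn_integral_sum nn_integral_cmult ennreal_mult del: sum_ennreal)
  then show ?thesis by (simp add: nn_integral_pmf_count_space cell_wt_eq[OF assms])
qed

lemma nn_integral_obs_marg:
  assumes "set_pmf \<nu> \<subseteq> Psi Phi"
  shows "(\<integral>\<^sup>+ ob. ennreal (obs_marg \<nu> \<pi> ob) \<partial>count_space UNIV) = 1"
proof -
  have "(\<integral>\<^sup>+ ob. ennreal (obs_marg \<nu> \<pi> ob) \<partial>count_space UNIV) = (\<Sum>\<phi>\<in>Phi. ennreal (cell_wt \<nu> \<phi>))"
    unfolding obs_marg_def using cell_obs_nonneg
    by (simp add: sum_ennreal[symmetric] nn_integral_sum nn_integral_cell_obs del: sum_ennreal)
  then show ?thesis using sum_cell_wt[OF assms] by simp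
qed

lemma pmf_mix_marginal: "set_pmf \<nu> \<subseteq> Psi Phi \<Longrightarrow> pmf (mix Obs (map_pmf fst \<nu>) \<pi>) ob = obs_marg \<nu> \<pi> ob"
  unfolding mix_def bind_map_pmf pmf_bind obs_marg_eq o_def using finite_Psi
  by (subst integral_measure_pmf[of "Psi Phi"]) auto

lemma pmf_mix_cond:
  assumes "\<phi> \<in> Phi" "cell_wt \<nu> \<phi> > 0"
  shows "pmf (mix Obs (map_pmf fst (cond_pmf \<nu> \<phi>)) \<pi>) ob = cell_obs \<nu> \<pi> \<phi> ob / cell_wt \<nu> \<phi>"
proof -
  have ne: "set_pmf \<nu> \<inter> \<phi> \<noteq> {}" using assms(2) measure_pmf_zero_iff[of \<nu> \<phi>] by auto
  have "pmf (mix Obs (map_pmf fst (cond_pmf \<nu> \<phi>)) \<pi>) ob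
      = (\<Sum>x\<in>\<phi>. pmf (cond_pmf \<nu> \<phi>) x * pmf (Obs (fst x) \<pi>) ob)"
    unfolding mix_def bind_map_pmf pmf_bind o_def using finite_cell[OF assms(1)] set_cond_pmf[OF ne]
    by (subst integral_measure_pmf[of \<phi>]) auto
  then show ?thesis using pmf_cond[OF ne] by (simp add: cell_obs_def sum_divide_distrib)
qed

lemma cell_wt_expectation_cond:
  assumes "\<phi> \<in> Phi"
  shows "cell_wt \<nu> \<phi> * measure_pmf.expectation (cond_pmf \<nu> \<phi>) h = (\<Sum>x\<in>\<phi>. pmf \<nu> x * h x)"
proof (cases "cell_wt \<nu> \<phi> = 0")
  case True
  then show ?thesis using assms finite_cell by (simp add: cell_wt_eq sum_nonneg_eq_0_iff)
next
  case False
  then have ne: "set_pmf \<nu> \<inter> \<phi> \<noteq> {}" using measure_pmf_zero_iff[of \<nu> \<phi>] by auto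
  have "measure_pmf.expectation (cond_pmf \<nu> \<phi>) h = (\<Sum>x\<in>\<phi>. pmf (cond_pmf \<nu> \<phi>) x * h x)"
    using finite_cell[OF assms] set_cond_pmf[OF ne] by (subst integral_measure_pmf[of \<phi>]) auto
  then show ?thesis using pmf_cond[OF ne] False by (simp add: sum_divide_distrib[symmetric])
qed

definition exp_gap :: "('m \<times> 'p) pmf \<Rightarrow> 'p \<Rightarrow> real" where
  "exp_gap \<nu> \<pi> = (\<Sum>x\<in>Psi Phi. pmf \<nu> x * (V (fst x) (snd x) - V (fst x) \<pi>))"

definition air_info :: "('m \<times> 'p) set pmf \<Rightarrow> ('m \<times> 'p) pmf \<Rightarrow> 'p \<Rightarrow> ennreal" where
  "air_info \<rho> \<nu> \<pi> = (\<Sum>x\<in>Psi Phi. ennreal (pmf \<nu> x) *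
     (\<integral>\<^sup>+ ob. KLf (post Obs Phi \<nu> \<pi> ob) (pmf \<rho>) \<partial>measure_pmf (Obs (fst x) \<pi>)))"

definition dec_info :: "'m pmf \<Rightarrow> ('m \<times> 'p) pmf \<Rightarrow> 'p \<Rightarrow> ennreal" where
  "dec_info \<mu> \<nu> \<pi> = (\<Sum>\<phi>\<in>Phi. ennreal (cell_wt \<nu> \<phi>) *
     KL (mix Obs (map_pmf fst (cond_pmf \<nu> \<phi>)) \<pi>) (mix Obs \<mu> \<pi>))"

definition penalized :: "('m \<times> 'p) pmf \<Rightarrow> 'p \<Rightarrow> ennreal \<Rightarrow> ereal" where
  "penalized \<nu> \<pi> S = ereal (exp_gap \<nu> \<pi>) - enn2ereal (ennreal (1 / \<eta>) * S)"

lemma AIR_eq_sum: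
  "AIR Obs V Pis Phi \<rho> \<eta> p \<nu> = (\<Sum>\<pi>\<in>Pis. ereal (pmf p \<pi>) * penalized \<nu> \<pi> (air_info \<rho> \<nu> \<pi>))"
  unfolding AIR_def penalized_def exp_gap_def air_info_def
  using finite_Psi eta_pos by (subst sum_ereal_mult_minus_enn2ereal) auto

lemma DEC_obj_eq_sum:
  "DEC_obj Obs V Pis Phi \<eta> \<mu> p \<nu> = (\<Sum>\<pi>\<in>Pis. ereal (pmf p \<pi>) * penalized \<nu> \<pi> (dec_info \<mu> \<nu> \<pi>))"
proof -
  have "(\<Sum>\<phi>\<in>Phi. cell_wt \<nu> \<phi> * measure_pmf.expectation (cond_pmf \<nu> \<phi>)
          (\<lambda>x. V (fst x) (snd x) - V (fst x) \<pi>)) = exp_gap \<nu> \<pi>" for \<pi>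
    unfolding exp_gap_def sum_Psi by (intro sum.cong refl cell_wt_expectation_cond)
  then show ?thesis
    unfolding DEC_obj_def penalized_def dec_info_def
    using finite_Phi eta_pos by (subst sum_ereal_mult_minus_enn2ereal) auto
qed

lemma dec_info_eq_kl_persp:
  "dec_info \<mu> \<nu> \<pi> = (\<Sum>\<phi>\<in>Phi. \<integral>\<^sup>+ ob. kl_persp (cell_wt \<nu> \<phi>) (cell_obs \<nu> \<pi> \<phi> ob) (pmf (mix Obs \<mu> \<pi>) ob)
                                 \<partial>count_space UNIV)"
  unfolding dec_info_def
proof (intro sum.cong refl)
  fix \<phi> assume \<phi>: "\<phi> \<in> Phi"
  show "ennreal (cell_wt \<nu> \<phi>) * KL (mix Obs (map_pmf fst (cond_pmf \<nu> \<phi>)) \<pi>) (mix Obs \<mu> \<pi>)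
      = (\<integral>\<^sup>+ ob. kl_persp (cell_wt \<nu> \<phi>) (cell_obs \<nu> \<pi> \<phi> ob) (pmf (mix Obs \<mu> \<pi>) ob) \<partial>count_space UNIV)"
  proof (cases "cell_wt \<nu> \<phi> = 0")
    case False
    then have w: "cell_wt \<nu> \<phi> > 0" by (simp add: less_le)
    show ?thesis unfolding KL_def KLf_def kl_persp_def pmf_mix_cond[OF \<phi> w]
      by (rule nn_integral_cmult[symmetric]) simp
  qed (simp add: kl_persp_def)
qed

lemma KLf_post:
  assumes "set_pmf \<rho> \<subseteq> Phi"
  shows "KLf (post Obs Phi \<nu> \<pi> ob) (pmf \<rho>)
           = (\<Sum>\<phi>\<in>Phi. kl_term (cell_obs \<nu> \<pi> \<phi> ob / obs_marg \<nu> \<pi> ob) (pmf \<rho> \<phi>))"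
  unfolding KLf_def
proof (subst nn_integral_count_space'[OF finite_Phi])
  show "\<phi> \<notin> Phi \<Longrightarrow> kl_term (post Obs Phi \<nu> \<pi> ob \<phi>) (pmf \<rho> \<phi>) = 0" for \<phi>
    using assms by (auto simp: post_def set_pmf_eq kl_term_def)
qed (simp_all add: post_def cell_obs_def obs_marg_def)

lemma air_info_eq_kl_persp:
  assumes \<nu>: "set_pmf \<nu> \<subseteq> Psi Phi" and \<rho>: "set_pmf \<rho> \<subseteq> Phi"
  shows "air_info \<rho> \<nu> \<pi> = (\<Sum>\<phi>\<in>Phi. \<integral>\<^sup>+ ob. kl_persp (obs_marg \<nu> \<pi> ob) (cell_obs \<nu> \<pi> \<phi> ob) (pmf \<rho> \<phi>)
                                    \<partial>count_space UNIV)"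
proof -
  define K where "K ob = KLf (post Obs Phi \<nu> \<pi> ob) (pmf \<rho>)" for ob
  have "air_info \<rho> \<nu> \<pi>
      = (\<integral>\<^sup>+ ob. (\<Sum>x\<in>Psi Phi. ennreal (pmf \<nu> x * pmf (Obs (fst x) \<pi>) ob)) * K ob \<partial>count_space UNIV)"
    unfolding air_info_def K_def nn_integral_measure_pmf sum_distrib_right
    by (subst nn_integral_sum) (auto simp: nn_integral_cmult[symmetric] ennreal_mult mult.assoc)
  also have "\<dots> = (\<integral>\<^sup>+ ob. ennreal (obs_marg \<nu> \<pi> ob) * K ob \<partial>count_space UNIV)"
    by (simp add: obs_marg_eq sum_ennreal)
  also have "\<dots> = (\<integral>\<^sup>+ ob. (\<Sum>\<phi>\<in>Phi. kl_persp (obs_marg \<nu> \<pi> ob) (cell_obs \<nu> \<pi> \<phi> ob) (pmf \<rho> \<phi>))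
                    \<partial>count_space UNIV)"
    unfolding K_def KLf_post[OF \<rho>] kl_persp_def by (simp add: sum_distrib_left)
  finally show ?thesis by (simp add: nn_integral_sum)
qed

text \<open>The mutual information between the cell and the observation.  It is the value of
  both information terms at their optimal reference: the DEC term at the marginal mixture
  of nu and the AIR term at the cell marginal of nu.\<close>

definition mutual_info :: "('m \<times> 'p) pmf \<Rightarrow> 'p \<Rightarrow> ennreal" where
  "mutual_info \<nu> \<pi> = (\<Sum>\<phi>\<in>Phi. \<integral>\<^sup>+ ob. kl_persp (cell_wt \<nu> \<phi>) (cell_obs \<nu> \<pi> \<phi> ob) (obs_marg \<nu> \<pi> ob)
                                   \<partial>count_space UNIV)"

lemma kl_persp_cell_swap:
  "\<phi> \<in> Phi \<Longrightarrow> kl_persp (cell_wt \<nu> \<phi>) (cell_obs \<nu> \<pi> \<phi> ob) (obs_marg \<nu> \<pi> ob)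
                = kl_persp (obs_marg \<nu> \<pi> ob) (cell_obs \<nu> \<pi> \<phi> ob) (cell_wt \<nu> \<phi>)"
  by (rule kl_persp_swap) (auto simp: cell_obs_nonneg cell_obs_le_obs_marg cell_obs_zero_weight)

lemma dec_info_marginal: "set_pmf \<nu> \<subseteq> Psi Phi \<Longrightarrow> dec_info (map_pmf fst \<nu>) \<nu> \<pi> = mutual_info \<nu> \<pi>"
  by (simp add: dec_info_eq_kl_persp mutual_info_def pmf_mix_marginal)

lemma mutual_info_le_dec_info:
  assumes \<nu>: "set_pmf \<nu> \<subseteq> Psi Phi"
  shows "mutual_info \<nu> \<pi> \<le> dec_info \<mu> \<nu> \<pi>"
proof -
  have "(\<Sum>\<phi>\<in>Phi. kl_persp (cell_wt \<nu> \<phi>) (cell_obs \<nu> \<pi> \<phi> ob) (obs_marg \<nu> \<pi> ob))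
      \<le> (\<Sum>\<phi>\<in>Phi. kl_persp (cell_wt \<nu> \<phi>) (cell_obs \<nu> \<pi> \<phi> ob) (pmf (mix Obs \<mu> \<pi>) ob))" for ob
    using nn_integral_kl_persp_min[of Phi "cell_wt \<nu>" "\<lambda>\<phi>. cell_obs \<nu> \<pi> \<phi> ob" "obs_marg \<nu> \<pi> ob"
        "pmf (mix Obs \<mu> \<pi>) ob"]
    by (simp add: finite_Phi nn_integral_count_space_finite cell_obs_nonneg cell_obs_zero_weight
        sum_cell_wt[OF \<nu>] obs_marg_def sum_nonneg)
  then show ?thesis
    unfolding mutual_info_def dec_info_eq_kl_persp by (simp add: nn_integral_sum[symmetric] nn_integral_mono)
qed

lemma mutual_info_le_air_info:
  assumes \<nu>: "set_pmf \<nu> \<subseteq> Psi Phi" and \<rho>: "set_pmf \<rho> \<subseteq> Phi"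
  shows "mutual_info \<nu> \<pi> \<le> air_info \<rho> \<nu> \<pi>"
  unfolding mutual_info_def air_info_eq_kl_persp[OF \<nu> \<rho>]
proof (intro sum_mono)
  fix \<phi> assume \<phi>: "\<phi> \<in> Phi"
  have marg: "0 \<le> obs_marg \<nu> \<pi> ob \<and> (obs_marg \<nu> \<pi> ob = 0 \<longrightarrow> cell_obs \<nu> \<pi> \<phi> ob = 0)" for ob
    using cell_obs_le_obs_marg[OF \<phi>, of \<nu> \<pi> ob] cell_obs_nonneg[of \<nu> \<pi> \<phi> ob] by auto
  show "(\<integral>\<^sup>+ ob. kl_persp (cell_wt \<nu> \<phi>) (cell_obs \<nu> \<pi> \<phi> ob) (obs_marg \<nu> \<pi> ob) \<partial>count_space UNIV)
      \<le> (\<integral>\<^sup>+ ob. kl_persp (obs_marg \<nu> \<pi> ob) (cell_obs \<nu> \<pi> \<phi> ob) (pmf \<rho> \<phi>) \<partial>count_space UNIV)"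
    unfolding kl_persp_cell_swap[OF \<phi>]
    by (rule nn_integral_kl_persp_min)
      (use marg in \<open>auto simp: cell_obs_nonneg nn_integral_cell_obs[OF \<phi>] nn_integral_obs_marg[OF \<nu>]\<close>)
qed

definition cell_of :: "'m \<times> 'p \<Rightarrow> ('m \<times> 'p) set" where
  "cell_of x = (THE \<phi>. \<phi> \<in> Phi \<and> x \<in> \<phi>)"

definition cell_marginal :: "('m \<times> 'p) pmf \<Rightarrow> ('m \<times> 'p) set pmf" where
  "cell_marginal \<nu> = map_pmf cell_of \<nu>"

lemma cell_of_eq: "\<phi> \<in> Phi \<Longrightarrow> x \<in> \<phi> \<Longrightarrow> cell_of x = \<phi>"
  unfolding cell_of_def using cells_disjoint by (intro the_equality) auto

lemma set_cell_marginal: "set_pmf \<nu> \<subseteq> Psi Phi \<Longrightarrow> set_pmf (cell_marginal \<nu>) \<subseteq> Phi"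
  unfolding cell_marginal_def Psi_def by (auto simp: cell_of_eq)

lemma pmf_cell_marginal:
  assumes \<nu>: "set_pmf \<nu> \<subseteq> Psi Phi" and \<phi>: "\<phi> \<in> Phi"
  shows "pmf (cell_marginal \<nu>) \<phi> = cell_wt \<nu> \<phi>"
proof -
  have "cell_of -` {\<phi>} \<inter> set_pmf \<nu> = \<phi> \<inter> set_pmf \<nu>"
    using \<nu> \<phi> cell_of_eq unfolding Psi_def by blast
  then show ?thesis
    unfolding cell_marginal_def pmf_map by (metis measure_Int_set_pmf)
qed

lemma air_info_cell_marginal:
  assumes \<nu>: "set_pmf \<nu> \<subseteq> Psi Phi"
  shows "air_info (cell_marginal \<nu>) \<nu> \<pi> = mutual_info \<nu> \<pi>"
  unfolding air_info_eq_kl_persp[OF \<nu> set_cell_marginal[OF \<nu>]] mutual_info_def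
  by (intro sum.cong refl nn_integral_cong) (simp add: pmf_cell_marginal[OF \<nu>] kl_persp_cell_swap)

lemma penalized_antimono: "S \<le> S' \<Longrightarrow> penalized \<nu> \<pi> S' \<le> penalized \<nu> \<pi> S"
  unfolding penalized_def
  by (intro ereal_minus_mono order_refl) (simp add: less_eq_ennreal.rep_eq[symmetric] mult_left_mono)

lemma penalized_ne_PInf: "penalized \<nu> \<pi> S \<noteq> \<infinity>"
  unfolding penalized_def by (cases "enn2ereal (ennreal (1 / \<eta>) * S)") auto

lemma penalized_ennreal: "0 \<le> s \<Longrightarrow> penalized \<nu> \<pi> (ennreal s) = ereal (exp_gap \<nu> \<pi> - s / \<eta>)"
  unfolding penalized_def using eta_pos by (simp add: ennreal_mult[symmetric])

lemma penalized_shift: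
  assumes "S' \<le> S + ennreal L" "0 \<le> L"
  shows "penalized \<nu> \<pi> S \<le> penalized \<nu> \<pi> S' + ereal (L / \<eta>)"
proof (cases S)
  case (real s)
  then obtain s' where s': "S' = ennreal s'" "0 \<le> s'" "s' \<le> s + L"
    using assms by (cases S' rule: ennreal_cases) (auto simp: top_unique ennreal_plus[symmetric] simp del: ennreal_plus)
  have "s' / \<eta> \<le> (s + L) / \<eta>" using s' eta_pos by (simp add: divide_right_mono)
  then show ?thesis using real s' by (simp add: penalized_ennreal add_divide_distrib)
qed (use eta_pos in \<open>simp add: penalized_def ennreal_mult_top ennreal_eq_0_iff\<close>)

section \<open>Smoothing the reference model\<close>

text \<open>Mixing a little of the uniform distribution on Ms into the reference model makes every
  DEC information term finite, at the price of an additive ln (1 / (1 - eps)).\<close>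

definition smooth :: "real \<Rightarrow> 'm pmf \<Rightarrow> 'm pmf" where
  "smooth \<epsilon> \<mu> = mix_pmf \<epsilon> (pmf_of_set Ms) \<mu>"

lemma set_smooth: "0 \<le> \<epsilon> \<Longrightarrow> \<epsilon> \<le> 1 \<Longrightarrow> set_pmf \<mu> \<subseteq> Ms \<Longrightarrow> set_pmf (smooth \<epsilon> \<mu>) \<subseteq> Ms"
  unfolding smooth_def using set_mix_pmf[of \<epsilon> "pmf_of_set Ms" \<mu>] finite_Ms Ms_nonempty by auto

lemma pmf_mix_finite:
  "set_pmf \<mu> \<subseteq> Ms \<Longrightarrow> pmf (mix Obs \<mu> \<pi>) ob = (\<Sum>M\<in>Ms. pmf \<mu> M * pmf (Obs M \<pi>) ob)"
  unfolding mix_def pmf_bind using finite_Ms by (subst integral_measure_pmf[of Ms]) auto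

lemma pmf_mix_smooth:
  assumes "0 \<le> \<epsilon>" "\<epsilon> \<le> 1" "set_pmf \<mu> \<subseteq> Ms"
  shows "pmf (mix Obs (smooth \<epsilon> \<mu>) \<pi>) ob
           = \<epsilon> / card Ms * (\<Sum>M\<in>Ms. pmf (Obs M \<pi>) ob) + (1 - \<epsilon>) * pmf (mix Obs \<mu> \<pi>) ob"
proof -
  have "pmf (mix Obs (smooth \<epsilon> \<mu>) \<pi>) ob
      = (\<Sum>M\<in>Ms. \<epsilon> / card Ms * pmf (Obs M \<pi>) ob + (1 - \<epsilon>) * (pmf \<mu> M * pmf (Obs M \<pi>) ob))"
    unfolding pmf_mix_finite[OF set_smooth[OF assms]] unfolding smooth_def pmf_mix_pmf[OF assms(1,2)]
    using finite_Ms Ms_nonempty by (intro sum.cong refl) (auto simp: algebra_simps)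
  then show ?thesis by (simp add: sum.distrib sum_distrib_left pmf_mix_finite[OF assms(3)])
qed

lemma pmf_mix_smooth_ge:
  assumes "0 \<le> \<epsilon>" "\<epsilon> \<le> 1" "set_pmf \<mu> \<subseteq> Ms"
  shows "(1 - \<epsilon>) * pmf (mix Obs \<mu> \<pi>) ob \<le> pmf (mix Obs (smooth \<epsilon> \<mu>) \<pi>) ob"
    and "M \<in> Ms \<Longrightarrow> \<epsilon> / card Ms * pmf (Obs M \<pi>) ob \<le> pmf (mix Obs (smooth \<epsilon> \<mu>) \<pi>) ob"
proof -
  show "(1 - \<epsilon>) * pmf (mix Obs \<mu> \<pi>) ob \<le> pmf (mix Obs (smooth \<epsilon> \<mu>) \<pi>) ob"
    using assms by (simp add: pmf_mix_smooth sum_nonneg)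
  assume "M \<in> Ms"
  then have "\<epsilon> / card Ms * pmf (Obs M \<pi>) ob \<le> \<epsilon> / card Ms * (\<Sum>M\<in>Ms. pmf (Obs M \<pi>) ob)"
    using assms finite_Ms by (intro mult_left_mono member_le_sum) auto
  then show "\<epsilon> / card Ms * pmf (Obs M \<pi>) ob \<le> pmf (mix Obs (smooth \<epsilon> \<mu>) \<pi>) ob"
    using assms by (simp add: pmf_mix_smooth add_increasing2)
qed

lemma dec_info_smooth_le:
  assumes \<nu>: "set_pmf \<nu> \<subseteq> Psi Phi" and \<epsilon>: "0 < \<epsilon>" "\<epsilon> < 1" and \<mu>: "set_pmf \<mu> \<subseteq> Ms"
  shows "dec_info (smooth \<epsilon> \<mu>) \<nu> \<pi> \<le> dec_info \<mu> \<nu> \<pi> + ennreal (ln (1 / (1 - \<epsilon>)))"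
proof -
  let ?L = "ennreal (ln (1 / (1 - \<epsilon>)))"
  have "dec_info (smooth \<epsilon> \<mu>) \<nu> \<pi>
      \<le> (\<Sum>\<phi>\<in>Phi. ennreal (cell_wt \<nu> \<phi>) * (KL (mix Obs (map_pmf fst (cond_pmf \<nu> \<phi>)) \<pi>) (mix Obs \<mu> \<pi>) + ?L))"
    unfolding dec_info_def using \<epsilon> pmf_mix_smooth_ge(1)[of \<epsilon> \<mu>] \<mu>
    by (intro sum_mono mult_left_mono KL_shift_reference) auto
  also have "\<dots> = dec_info \<mu> \<nu> \<pi> + ennreal (\<Sum>\<phi>\<in>Phi. cell_wt \<nu> \<phi>) * ?L"
    unfolding dec_info_def by (simp add: distrib_left sum.distrib sum_distrib_right[symmetric])
  finally show ?thesis using sum_cell_wt[OF \<nu>] by simp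
qed

lemma KL_cond_mix_smooth_le:
  assumes \<phi>: "\<phi> \<in> Phi" and w: "cell_wt \<nu> \<phi> > 0" and \<epsilon>: "0 < \<epsilon>" "\<epsilon> \<le> 1" and \<mu>: "set_pmf \<mu> \<subseteq> Ms"
  shows "KL (mix Obs (map_pmf fst (cond_pmf \<nu> \<phi>)) \<pi>) (mix Obs (smooth \<epsilon> \<mu>) \<pi>) \<le> ennreal (ln (card Ms / \<epsilon>))"
proof (rule KL_le_ln_of_ratio_bound)
  have card: "1 \<le> real (card Ms)" using finite_Ms Ms_nonempty by (simp add: Suc_leI card_gt_0_iff)
  then show "1 \<le> card Ms / \<epsilon>" using \<epsilon> by (simp add: divide_simps)
  fix ob
  let ?q = "pmf (mix Obs (smooth \<epsilon> \<mu>) \<pi>) ob"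
  have "pmf (Obs (fst x) \<pi>) ob \<le> card Ms / \<epsilon> * ?q" if "x \<in> \<phi>" for x
  proof -
    have "fst x \<in> Ms" using cell_subset[OF \<phi>] that by auto
    then have "\<epsilon> / card Ms * pmf (Obs (fst x) \<pi>) ob \<le> ?q" using pmf_mix_smooth_ge(2) \<epsilon> \<mu> by auto
    then have "card Ms / \<epsilon> * (\<epsilon> / card Ms * pmf (Obs (fst x) \<pi>) ob) \<le> card Ms / \<epsilon> * ?q"
      using \<epsilon> by (intro mult_left_mono) auto
    then show ?thesis using \<epsilon> card by simp
  qed
  then have "cell_obs \<nu> \<pi> \<phi> ob \<le> (\<Sum>x\<in>\<phi>. pmf \<nu> x * (card Ms / \<epsilon> * ?q))"
    unfolding cell_obs_def by (intro sum_mono mult_left_mono) auto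
  also have "\<dots> = cell_wt \<nu> \<phi> * (card Ms / \<epsilon> * ?q)" by (simp only: cell_wt_eq[OF \<phi>] sum_distrib_right)
  finally show "pmf (mix Obs (map_pmf fst (cond_pmf \<nu> \<phi>)) \<pi>) ob \<le> card Ms / \<epsilon> * ?q"
    unfolding pmf_mix_cond[OF \<phi> w] using w by (simp only: pos_divide_le_eq mult.commute)
qed

lemma dec_info_smooth_finite:
  assumes \<epsilon>: "0 < \<epsilon>" "\<epsilon> \<le> 1" and \<mu>: "set_pmf \<mu> \<subseteq> Ms"
  shows "dec_info (smooth \<epsilon> \<mu>) \<nu> \<pi> < \<infinity>"
proof -
  have "dec_info (smooth \<epsilon> \<mu>) \<nu> \<pi> \<le> (\<Sum>\<phi>\<in>Phi. ennreal (cell_wt \<nu> \<phi>) * ennreal (ln (card Ms / \<epsilon>)))"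
    unfolding dec_info_def
  proof (intro sum_mono)
    fix \<phi> assume \<phi>: "\<phi> \<in> Phi"
    show "ennreal (cell_wt \<nu> \<phi>) * KL (mix Obs (map_pmf fst (cond_pmf \<nu> \<phi>)) \<pi>) (mix Obs (smooth \<epsilon> \<mu>) \<pi>)
        \<le> ennreal (cell_wt \<nu> \<phi>) * ennreal (ln (card Ms / \<epsilon>))"
      using KL_cond_mix_smooth_le[OF \<phi> _ \<epsilon> \<mu>, of \<nu> \<pi>]
      by (cases "cell_wt \<nu> \<phi> = 0") (auto simp: less_le intro: mult_left_mono)
  qed
  also have "\<dots> < \<infinity>" by (simp add: less_top[symmetric] ennreal_sum_eq_top finite_Phi ennreal_mult_eq_top_iff)
  finally show ?thesis .
qed

lemma set_mix_pmf_Psi: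
  "set_pmf \<nu>1 \<subseteq> Psi Phi \<Longrightarrow> set_pmf \<nu>2 \<subseteq> Psi Phi \<Longrightarrow> 0 \<le> t \<Longrightarrow> t \<le> 1 \<Longrightarrow>
     set_pmf (mix_pmf t \<nu>1 \<nu>2) \<subseteq> Psi Phi"
  using set_mix_pmf[of t \<nu>1 \<nu>2] by auto

lemma mix_pmf_linear:
  assumes "0 \<le> t" "t \<le> 1"
  shows cell_wt_mix_pmf: "\<phi> \<in> Phi \<Longrightarrow> cell_wt (mix_pmf t \<nu>1 \<nu>2) \<phi> = t * cell_wt \<nu>1 \<phi> + (1 - t) * cell_wt \<nu>2 \<phi>"
    and cell_obs_mix_pmf:
      "cell_obs (mix_pmf t \<nu>1 \<nu>2) \<pi> \<phi> ob = t * cell_obs \<nu>1 \<pi> \<phi> ob + (1 - t) * cell_obs \<nu>2 \<pi> \<phi> ob"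
    and exp_gap_mix_pmf: "exp_gap (mix_pmf t \<nu>1 \<nu>2) \<pi> = t * exp_gap \<nu>1 \<pi> + (1 - t) * exp_gap \<nu>2 \<pi>"
  by (simp_all add: cell_wt_eq cell_obs_def exp_gap_def pmf_mix_pmf[OF assms]
      sum.distrib sum_distrib_left distrib_right mult.assoc)

lemma dec_info_convex:
  assumes \<nu>: "set_pmf \<nu>1 \<subseteq> Psi Phi" "set_pmf \<nu>2 \<subseteq> Psi Phi" and t: "0 \<le> t" "t \<le> 1"
  shows "dec_info \<mu> (mix_pmf t \<nu>1 \<nu>2) \<pi> \<le> ennreal t * dec_info \<mu> \<nu>1 \<pi> + ennreal (1 - t) * dec_info \<mu> \<nu>2 \<pi>"
proof -
  let ?q = "\<lambda>ob. pmf (mix Obs \<mu> \<pi>) ob"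
  have "dec_info \<mu> (mix_pmf t \<nu>1 \<nu>2) \<pi>
      \<le> (\<Sum>\<phi>\<in>Phi. \<integral>\<^sup>+ ob. ennreal t * kl_persp (cell_wt \<nu>1 \<phi>) (cell_obs \<nu>1 \<pi> \<phi> ob) (?q ob)
          + ennreal (1 - t) * kl_persp (cell_wt \<nu>2 \<phi>) (cell_obs \<nu>2 \<pi> \<phi> ob) (?q ob) \<partial>count_space UNIV)"
    unfolding dec_info_eq_kl_persp
    by (intro sum_mono nn_integral_mono)
      (auto simp: cell_wt_mix_pmf[OF t] cell_obs_mix_pmf[OF t] cell_obs_nonneg cell_obs_zero_weight
        intro!: kl_persp_convex t)
  also have "\<dots> = ennreal t * dec_info \<mu> \<nu>1 \<pi> + ennreal (1 - t) * dec_info \<mu> \<nu>2 \<pi>"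
    unfolding dec_info_eq_kl_persp sum_distrib_left sum.distrib[symmetric]
    by (intro sum.cong refl) (simp add: nn_integral_add nn_integral_cmult)
  finally show ?thesis .
qed

definition dec_pen_real :: "'m pmf \<Rightarrow> ('m \<times> 'p) pmf \<Rightarrow> 'p \<Rightarrow> real" where
  "dec_pen_real \<mu> \<nu> \<pi> = exp_gap \<nu> \<pi> - enn2real (dec_info \<mu> \<nu> \<pi>) / \<eta>"

lemma penalized_dec_info_finite:
  "dec_info \<mu> \<nu> \<pi> < \<infinity> \<Longrightarrow> penalized \<nu> \<pi> (dec_info \<mu> \<nu> \<pi>) = ereal (dec_pen_real \<mu> \<nu> \<pi>)"
  by (cases "dec_info \<mu> \<nu> \<pi>" rule: ennreal_cases) (auto simp: penalized_ennreal dec_pen_real_def)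

lemma dec_pen_real_concave:
  assumes finite: "\<And>\<nu>. set_pmf \<nu> \<subseteq> Psi Phi \<Longrightarrow> dec_info \<mu> \<nu> \<pi> < \<infinity>"
  shows "concave_along (pmfs_on (Psi Phi)) mix_pmf (\<lambda>\<nu>. dec_pen_real \<mu> \<nu> \<pi>)"
  unfolding concave_along_def
proof (intro ballI allI impI)
  fix \<nu>1 \<nu>2 and t :: real assume \<nu>: "\<nu>1 \<in> pmfs_on (Psi Phi)" "\<nu>2 \<in> pmfs_on (Psi Phi)" and t: "0 \<le> t \<and> t \<le> 1"
  obtain s1 where s1: "dec_info \<mu> \<nu>1 \<pi> = ennreal s1" "0 \<le> s1"
    using finite[of \<nu>1] \<nu> by (cases "dec_info \<mu> \<nu>1 \<pi>" rule: ennreal_cases) auto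
  obtain s2 where s2: "dec_info \<mu> \<nu>2 \<pi> = ennreal s2" "0 \<le> s2"
    using finite[of \<nu>2] \<nu> by (cases "dec_info \<mu> \<nu>2 \<pi>" rule: ennreal_cases) auto
  note s = s1 s2
  have "dec_info \<mu> (mix_pmf t \<nu>1 \<nu>2) \<pi> \<le> ennreal (t * s1 + (1 - t) * s2)"
    using dec_info_convex[of \<nu>1 \<nu>2 t \<mu> \<pi>] \<nu> t s by (simp add: ennreal_mult)
  then have "enn2real (dec_info \<mu> (mix_pmf t \<nu>1 \<nu>2) \<pi>) / \<eta> \<le> (t * s1 + (1 - t) * s2) / \<eta>"
    using s t eta_pos by (intro divide_right_mono) (auto simp: enn2real_leI)
  moreover have "t * dec_pen_real \<mu> \<nu>1 \<pi> + (1 - t) * dec_pen_real \<mu> \<nu>2 \<pi>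
      = t * exp_gap \<nu>1 \<pi> + (1 - t) * exp_gap \<nu>2 \<pi> - (t * s1 + (1 - t) * s2) / \<eta>"
    unfolding dec_pen_real_def s using s eta_pos by (simp add: field_simps)
  ultimately show "t * dec_pen_real \<mu> \<nu>1 \<pi> + (1 - t) * dec_pen_real \<mu> \<nu>2 \<pi> \<le> dec_pen_real \<mu> (mix_pmf t \<nu>1 \<nu>2) \<pi>"
    unfolding dec_pen_real_def exp_gap_mix_pmf[OF conjunct1[OF t] conjunct2[OF t]] by linarith
qed

section \<open>Comparison of the two min-max values\<close>

definition air_maxmin :: ereal where
  "air_maxmin = (SUP \<rho>\<in>pmfs_on Phi. SUP \<nu>\<in>pmfs_on (Psi Phi). INF p\<in>pmfs_on Pis. AIR Obs V Pis Phi \<rho> \<eta> p \<nu>)"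

lemma AIR_le_DEC_obj_marginal:
  "set_pmf \<nu> \<subseteq> Psi Phi \<Longrightarrow> set_pmf \<rho> \<subseteq> Phi \<Longrightarrow>
     AIR Obs V Pis Phi \<rho> \<eta> p \<nu> \<le> DEC_obj Obs V Pis Phi \<eta> (map_pmf fst \<nu>) p \<nu>"
  unfolding AIR_eq_sum DEC_obj_eq_sum
  by (intro sum_mono ereal_mult_left_mono penalized_antimono)
    (auto simp: dec_info_marginal mutual_info_le_air_info)

lemma air_maxmin_le_DEC_KL: "air_maxmin \<le> DEC_KL Ms Obs V Pis Phi \<eta>"
  unfolding air_maxmin_def
proof (intro SUP_least)
  fix \<rho> \<nu> assume \<rho>: "\<rho> \<in> pmfs_on Phi" and \<nu>: "\<nu> \<in> pmfs_on (Psi Phi)"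
  have "(INF p\<in>pmfs_on Pis. AIR Obs V Pis Phi \<rho> \<eta> p \<nu>)
      \<le> (INF p\<in>pmfs_on Pis. SUP \<nu>'\<in>pmfs_on (Psi Phi). DEC_obj Obs V Pis Phi \<eta> (map_pmf fst \<nu>) p \<nu>')"
    using \<rho> \<nu> by (intro INF_superset_mono order_refl SUP_upper2[OF \<nu>] AIR_le_DEC_obj_marginal) auto
  also have "\<dots> \<le> DEC_KL Ms Obs V Pis Phi \<eta>"
    unfolding DEC_KL_def using \<nu> Psi_subset by (intro SUP_upper) auto
  finally show "(INF p\<in>pmfs_on Pis. AIR Obs V Pis Phi \<rho> \<eta> p \<nu>) \<le> DEC_KL Ms Obs V Pis Phi \<eta>" .
qed

lemma exists_policy_dec_le_air_maxmin:
  assumes \<nu>: "set_pmf \<nu> \<subseteq> Psi Phi"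
  shows "\<exists>\<pi>\<in>Pis. penalized \<nu> \<pi> (dec_info \<mu> \<nu> \<pi>) \<le> air_maxmin"
proof -
  let ?a = "\<lambda>\<pi>. penalized \<nu> \<pi> (air_info (cell_marginal \<nu>) \<nu> \<pi>)"
  have "Min (?a ` Pis) \<in> ?a ` Pis" using finite_Pis Pis_nonempty by simp
  then obtain \<pi>0 where \<pi>0: "\<pi>0 \<in> Pis" "?a \<pi>0 = Min (?a ` Pis)" by auto
  have "penalized \<nu> \<pi>0 (dec_info \<mu> \<nu> \<pi>0) \<le> ?a \<pi>0"
    by (rule penalized_antimono) (simp add: air_info_cell_marginal[OF \<nu>] mutual_info_le_dec_info[OF \<nu>])
  also have "\<dots> \<le> (INF p\<in>pmfs_on Pis. AIR Obs V Pis Phi (cell_marginal \<nu>) \<eta> p \<nu>)"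
    unfolding AIR_eq_sum \<pi>0(2)
    by (intro INF_greatest sum_pmf_ereal_ge_Min finite_Pis) (auto simp: penalized_ne_PInf)
  also have "\<dots> \<le> air_maxmin"
    unfolding air_maxmin_def using \<nu> set_cell_marginal[OF \<nu>]
    by (intro SUP_upper2[of "cell_marginal \<nu>"] SUP_upper) auto
  finally show ?thesis using \<pi>0 by blast
qed

lemma exists_policy_dec_pen_real_le:
  assumes \<nu>: "set_pmf \<nu> \<subseteq> Psi Phi" and \<epsilon>: "0 < \<epsilon>" "\<epsilon> \<le> 1" and \<mu>: "set_pmf \<mu> \<subseteq> Ms"
  shows "\<exists>\<pi>\<in>Pis. ereal (dec_pen_real (smooth \<epsilon> \<mu>) \<nu> \<pi>) \<le> air_maxmin"
  using exists_policy_dec_le_air_maxmin[OF \<nu>, of "smooth \<epsilon> \<mu>"]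
  by (simp only: penalized_dec_info_finite[OF dec_info_smooth_finite[OF \<epsilon> \<mu>]])

lemma smoothed_minimax:
  assumes \<epsilon>: "0 < \<epsilon>" "\<epsilon> \<le> 1" and \<mu>: "set_pmf \<mu> \<subseteq> Ms"
    and pointwise: "\<And>\<nu>. set_pmf \<nu> \<subseteq> Psi Phi \<Longrightarrow> \<exists>\<pi>\<in>Pis. dec_pen_real (smooth \<epsilon> \<mu>) \<nu> \<pi> \<le> c"
  shows "\<exists>q\<in>pmfs_on Pis. \<forall>\<nu>\<in>pmfs_on (Psi Phi). (\<Sum>\<pi>\<in>Pis. pmf q \<pi> * dec_pen_real (smooth \<epsilon> \<mu>) \<nu> \<pi>) \<le> c"
  using finite_Pis Pis_nonempty
proof (rule finite_minimax_concave[where mx = mix_pmf])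
  show "mix_pmf t \<nu>1 \<nu>2 \<in> pmfs_on (Psi Phi)"
    if "\<nu>1 \<in> pmfs_on (Psi Phi)" "\<nu>2 \<in> pmfs_on (Psi Phi)" "0 \<le> t" "t \<le> 1" for \<nu>1 \<nu>2 t
    using set_mix_pmf_Psi that by auto
  show "concave_along (pmfs_on (Psi Phi)) mix_pmf (\<lambda>\<nu>. dec_pen_real (smooth \<epsilon> \<mu>) \<nu> \<pi>)" for \<pi>
    by (rule dec_pen_real_concave) (rule dec_info_smooth_finite[OF \<epsilon> \<mu>])
qed (use pointwise in auto)

lemma DEC_obj_le_smoothed:
  assumes \<nu>: "set_pmf \<nu> \<subseteq> Psi Phi" and \<epsilon>: "0 < \<epsilon>" "\<epsilon> < 1" and \<mu>: "set_pmf \<mu> \<subseteq> Ms"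
    and q: "set_pmf q \<subseteq> Pis"
  shows "DEC_obj Obs V Pis Phi \<eta> \<mu> q \<nu>
           \<le> ereal ((\<Sum>\<pi>\<in>Pis. pmf q \<pi> * dec_pen_real (smooth \<epsilon> \<mu>) \<nu> \<pi>) + ln (1 / (1 - \<epsilon>)) / \<eta>)"
proof -
  let ?L = "ln (1 / (1 - \<epsilon>)) / \<eta>"
  have "penalized \<nu> \<pi> (dec_info \<mu> \<nu> \<pi>) \<le> ereal (dec_pen_real (smooth \<epsilon> \<mu>) \<nu> \<pi> + ?L)" for \<pi>
  proof -
    have "penalized \<nu> \<pi> (dec_info \<mu> \<nu> \<pi>) \<le> penalized \<nu> \<pi> (dec_info (smooth \<epsilon> \<mu>) \<nu> \<pi>) + ereal ?L"
      using dec_info_smooth_le[OF \<nu> \<epsilon> \<mu>] \<epsilon> by (intro penalized_shift) auto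
    then show ?thesis
      unfolding penalized_dec_info_finite[OF dec_info_smooth_finite[OF \<epsilon>(1) less_imp_le[OF \<epsilon>(2)] \<mu>]]
      by simp
  qed
  then have "DEC_obj Obs V Pis Phi \<eta> \<mu> q \<nu>
      \<le> (\<Sum>\<pi>\<in>Pis. ereal (pmf q \<pi>) * ereal (dec_pen_real (smooth \<epsilon> \<mu>) \<nu> \<pi> + ?L))"
    unfolding DEC_obj_eq_sum by (intro sum_mono ereal_mult_left_mono) auto
  also have "\<dots> = ereal ((\<Sum>\<pi>\<in>Pis. pmf q \<pi> * dec_pen_real (smooth \<epsilon> \<mu>) \<nu> \<pi>) + (\<Sum>\<pi>\<in>Pis. pmf q \<pi>) * ?L)"
    by (simp add: distrib_left sum.distrib sum_distrib_right sum_divide_distrib[symmetric])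
  finally show ?thesis using sum_pmf_eq_1[OF finite_Pis q] by simp
qed

text \<open>For a fixed reference model the min-max of the DEC objective is at most the AIR
  max-min value up to any e > 0: smoothing the reference by eps = 1 - exp (- e eta) costs
  at most e and makes the objective real-valued and concave in nu, so the finite minimax
  lemma applies.\<close>

lemma INF_SUP_DEC_obj_le:
  assumes \<mu>: "set_pmf \<mu> \<subseteq> Ms" and e: "0 < e"
  shows "(INF p\<in>pmfs_on Pis. SUP \<nu>\<in>pmfs_on (Psi Phi). DEC_obj Obs V Pis Phi \<eta> \<mu> p \<nu>) \<le> air_maxmin + ereal e"
proof -
  define \<epsilon> where "\<epsilon> = 1 - exp (- (e * \<eta>))"
  have \<epsilon>: "0 < \<epsilon>" "\<epsilon> < 1" unfolding \<epsilon>_def using e eta_pos by auto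
  have L: "ln (1 / (1 - \<epsilon>)) / \<eta> = e" unfolding \<epsilon>_def using eta_pos by (simp add: ln_div)
  note pointwise = exists_policy_dec_pen_real_le[OF _ \<epsilon>(1) less_imp_le[OF \<epsilon>(2)] \<mu>]
  show ?thesis
  proof (cases air_maxmin)
    case (real c)
    have "\<exists>q\<in>pmfs_on Pis. \<forall>\<nu>\<in>pmfs_on (Psi Phi). (\<Sum>\<pi>\<in>Pis. pmf q \<pi> * dec_pen_real (smooth \<epsilon> \<mu>) \<nu> \<pi>) \<le> c"
    proof (rule smoothed_minimax[OF \<epsilon>(1) less_imp_le[OF \<epsilon>(2)] \<mu>])
      show "set_pmf \<nu> \<subseteq> Psi Phi \<Longrightarrow> \<exists>\<pi>\<in>Pis. dec_pen_real (smooth \<epsilon> \<mu>) \<nu> \<pi> \<le> c" for \<nu>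
        using pointwise[of \<nu>] real by auto
    qed
    then obtain q where q: "q \<in> pmfs_on Pis"
      and q_le: "\<forall>\<nu>\<in>pmfs_on (Psi Phi). (\<Sum>\<pi>\<in>Pis. pmf q \<pi> * dec_pen_real (smooth \<epsilon> \<mu>) \<nu> \<pi>) \<le> c"
      by blast
    have "(INF p\<in>pmfs_on Pis. SUP \<nu>\<in>pmfs_on (Psi Phi). DEC_obj Obs V Pis Phi \<eta> \<mu> p \<nu>)
        \<le> (SUP \<nu>\<in>pmfs_on (Psi Phi). DEC_obj Obs V Pis Phi \<eta> \<mu> q \<nu>)"
      using q by (rule INF_lower)
    also have "\<dots> \<le> ereal (c + e)"
    proof (rule SUP_least)
      fix \<nu> assume \<nu>: "\<nu> \<in> pmfs_on (Psi Phi)"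
      have "DEC_obj Obs V Pis Phi \<eta> \<mu> q \<nu> \<le> ereal ((\<Sum>\<pi>\<in>Pis. pmf q \<pi> * dec_pen_real (smooth \<epsilon> \<mu>) \<nu> \<pi>) + e)"
        using DEC_obj_le_smoothed[OF _ \<epsilon> \<mu>, of \<nu> q] \<nu> q unfolding L by simp
      also have "\<dots> \<le> ereal (c + e)" using q_le \<nu> by simp
      finally show "DEC_obj Obs V Pis Phi \<eta> \<mu> q \<nu> \<le> ereal (c + e)" .
    qed
    finally show ?thesis using real by simp
  next
    case MInf
    then have "pmfs_on (Psi Phi) = {}" using pointwise by auto
    moreover obtain \<pi> where "\<pi> \<in> Pis" using Pis_nonempty by blast
    ultimately show ?thesis by (intro INF_lower2[of "return_pmf \<pi>"]) auto
  qed simp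
qed

lemma DEC_KL_le_air_maxmin: "DEC_KL Ms Obs V Pis Phi \<eta> \<le> air_maxmin"
  unfolding DEC_KL_def
proof (rule SUP_least)
  fix \<mu> assume "\<mu> \<in> pmfs_on Ms"
  then show "(INF p\<in>pmfs_on Pis. SUP \<nu>\<in>pmfs_on (Psi Phi). DEC_obj Obs V Pis Phi \<eta> \<mu> p \<nu>) \<le> air_maxmin"
    by (intro ereal_le_epsilon2[OF INF_SUP_DEC_obj_le]) auto
qed

end

theorem mainTheorem2:
  fixes Ms :: "'m set" and Pis :: "'p set"
    and Obs :: "'m \<Rightarrow> 'p \<Rightarrow> 'o pmf" and V :: "'m \<Rightarrow> 'p \<Rightarrow> real"
    and Phi :: "('m \<times> 'p) set set" and \<eta> :: real
  assumes "finite Ms" and "Ms \<noteq> {}" and "finite Pis" and "Pis \<noteq> {}"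
    and "\<And>M \<pi>. M \<in> Ms \<Longrightarrow> \<pi> \<in> Pis \<Longrightarrow> 0 \<le> V M \<pi> \<and> V M \<pi> \<le> 1"
    and "\<And>\<phi>. \<phi> \<in> Phi \<Longrightarrow> \<phi> \<subseteq> Ms \<times> Pis"
    and "\<And>\<phi> \<phi>'. \<phi> \<in> Phi \<Longrightarrow> \<phi>' \<in> Phi \<Longrightarrow> \<phi> \<noteq> \<phi>' \<Longrightarrow> \<phi> \<inter> \<phi>' = {}"
    and "\<eta> > 0"
  shows "(SUP \<rho>\<in>{\<rho>. set_pmf \<rho> \<subseteq> Phi}. SUP \<nu>\<in>{\<nu>. set_pmf \<nu> \<subseteq> Psi Phi}.
            INF p\<in>{p. set_pmf p \<subseteq> Pis}. AIR Obs V Pis Phi \<rho> \<eta> p \<nu>)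
         = DEC_KL Ms Obs V Pis Phi \<eta>"
proof -
  interpret air_dec Ms Pis Obs V Phi \<eta>
    using assms(1-4,6-8) by unfold_locales
  show ?thesis
    using air_maxmin_le_DEC_KL DEC_KL_le_air_maxmin unfolding air_maxmin_def by (rule antisym)
qed

end
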